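(* Let $G=(V,E)$ be a countable graph with degrees bounded by $\Delta<\infty$, $\alpha\in[0,1/2)$, $\{N_t\}$ the weakly reinforced Pólya urn process on $G$ with exponent $\alpha$, $X_t=N_t/t$, and let $\mu$ be a non-vanishing equilibrium on $G$ with $\mu(e)\ge 2/\Delta^{1/(1-\alpha)}$ for all $e$. Let $\varrho>1$ and $e\in E$. Then almost surely on the event that $\mathcal C(e')\subseteq[\varrho^{-1}\mu(e'),\varrho\mu(e')]$ for all $e'\in E_e$, we have $\mathcal C(e)\subseteq[\varrho^{-2\alpha}\mu(e),\varrho^{2\alpha}\mu(e)]$.
   Context: $E_v=\{e\in E:v\in e\}$, $E_e=\{e'\in E:e'\cap e\ne\emptyset\}$. Process: $\{P_v\}_{v\in V}$ i.i.d. Poisson point processes on $[0,\infty)\times[0,1]$ of intensity 1; $N_0\equiv1$; with $\mathrm{pol}_{v,e}(N)=N(e)^\alpha/\sum_{e'\in E_v}N(e')^\alpha$ and an enumeration $E_v=\{e_1,\dots,e_{\deg(v)}\}$, at each atom $(t,u)$ of $P_v$ the weight of $e_i$ increases by 1 if $u\in(\sum_{j<i}\mathrm{pol}_{v,e_j}(N_t),\sum_{j\le i}\mathrm{pol}_{v,e_j}(N_t)]$ (weights just before $t$). An equilibrium is $\mu\in[0,\infty)^E$ with $\mu(e)=\sum_{v\in e}\mu(e)^\alpha/\sum_{e'\in E_v}\mu(e')^\alpha$ whenever $\mu(e)>0$; non-vanishing means $\mu>0$ everywhere. $X_-(e)=\liminf_{t\to\infty}X_t(e)$, $X_+(e)=\limsup_{t\to\infty}X_t(e)$,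 $\mathcal C(e)=[X_-(e),X_+(e)]$. *)

theory Defs
  imports "HOL-Probability.Probability"
begin

definition Ev :: "'a set set \<Rightarrow> 'a \<Rightarrow> 'a set set" where
  "Ev E v = {e \<in> E. v \<in> e}"

definition Ee :: "'a set set \<Rightarrow> 'a set \<Rightarrow> 'a set set" where
  "Ee E e = {e' \<in> E. e' \<inter> e \<noteq> {}}"

definition countable_graph_bdeg :: "'a set \<Rightarrow> 'a set set \<Rightarrow> nat \<Rightarrow> bool" where
  "countable_graph_bdeg V E \<Delta> \<longleftrightarrow>
     countable V \<and> (\<forall>e\<in>E. e \<subseteq> V \<and> card e = 2) \<and>
     (\<forall>v\<in>V. finite (Ev E v) \<and> card (Ev E v) \<le> \<Delta>)"

text \<open>Power with the convention 0^0 = 1 (Isabelle's powr has 0 powr 0 = 0).\<close>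

definition pw :: "real \<Rightarrow> real \<Rightarrow> real" where
  "pw x a = (if x = 0 then (if a = 0 then 1 else 0) else x powr a)"

definition equilibrium :: "'a set set \<Rightarrow> real \<Rightarrow> ('a set \<Rightarrow> real) \<Rightarrow> bool" where
  "equilibrium E \<alpha> \<mu> \<longleftrightarrow>
     (\<forall>e\<in>E. 0 \<le> \<mu> e) \<and>
     (\<forall>e\<in>E. 0 < \<mu> e \<longrightarrow>
        \<mu> e = (\<Sum>v\<in>e. pw (\<mu> e) \<alpha> / (\<Sum>e'\<in>Ev E v. pw (\<mu> e') \<alpha>)))"

definition non_vanishing :: "'a set set \<Rightarrow> ('a set \<Rightarrow> real) \<Rightarrow> bool" where
  "non_vanishing E \<mu> \<longleftrightarrow> (\<forall>e\<in>E. 0 < \<mu> e)"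

text \<open>An independent family (indexed by V) of Poisson point processes of intensity 1 on
  [0,\<infinity>) \<times> [0,1], each given as its random set of atoms P v \<omega>:
  counts on bounded Borel sets are Poisson with mean the Lebesgue measure, and counts on
  pairwise disjoint sets (for the same vertex) or for distinct vertices are independent.\<close>

definition ppp_domain :: "(real \<times> real) set set" where
  "ppp_domain = {A. A \<in> sets lborel \<and> A \<subseteq> {0..} \<times> {0..1} \<and> emeasure lborel A < \<infinity>}"

definition iid_ppp_family ::
  "'w measure \<Rightarrow> 'a set \<Rightarrow> ('a \<Rightarrow> 'w \<Rightarrow> (real \<times> real) set) \<Rightarrow> bool" where
  "iid_ppp_family M V P \<longleftrightarrow>
     prob_space M \<and>
     (\<forall>v\<in>V. \<forall>A\<in>ppp_domain.
        (AE \<omega> in M. finite (P v \<omega> \<inter> A)) \<and>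
        (\<lambda>\<omega>. card (P v \<omega> \<inter> A)) \<in> measurable M (count_space UNIV) \<and>
        (\<forall>k::nat. measure M {\<omega> \<in> space M. card (P v \<omega> \<inter> A) = k}
                 = (measure lborel A) ^ k / fact k * exp (- measure lborel A))) \<and>
     (\<forall>I. I \<subseteq> V \<times> ppp_domain \<longrightarrow>
        (\<forall>i\<in>I. \<forall>j\<in>I. i \<noteq> j \<longrightarrow> fst i \<noteq> fst j \<or> snd i \<inter> snd j = {}) \<longrightarrow>
        prob_space.indep_vars M (\<lambda>_. count_space UNIV)
          (\<lambda>i \<omega>. card (P (fst i) \<omega> \<inter> snd i)) I)"

definition pol :: "'a set set \<Rightarrow> real \<Rightarrow> 'a \<Rightarrow> ('a set \<Rightarrow> nat) \<Rightarrow> 'a set \<Rightarrow> real" where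
  "pol E \<alpha> v N e = pw (real (N e)) \<alpha> / (\<Sum>e'\<in>Ev E v. pw (real (N e')) \<alpha>)"

text \<open>An atom with mark u at vertex v (weights N just before) reinforces edge e iff
  e = e_i (w.r.t. the enumeration enum v) and u lies in
  (sum_{j<i} pol(e_j), sum_{j<=i} pol(e_j)].\<close>

definition selects ::
  "'a set set \<Rightarrow> real \<Rightarrow> ('a \<Rightarrow> nat \<Rightarrow> 'a set) \<Rightarrow> 'a \<Rightarrow> ('a set \<Rightarrow> nat) \<Rightarrow> real \<Rightarrow> 'a set \<Rightarrow> bool"
  where
  "selects E \<alpha> enum v N u e \<longleftrightarrow>
     (\<exists>i < card (Ev E v). enum v i = e \<and>
        (\<Sum>j<i. pol E \<alpha> v N (enum v j)) < u \<and> u \<le> (\<Sum>j\<le>i. pol E \<alpha> v N (enum v j)))"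

text \<open>Npre \<omega> t = N_{t-} (weights just before time t); it satisfies the pathwise
  defining equation (a.s.).\<close>

definition urn_pre ::
  "'w measure \<Rightarrow> 'a set set \<Rightarrow> real \<Rightarrow> ('a \<Rightarrow> nat \<Rightarrow> 'a set) \<Rightarrow>
   ('a \<Rightarrow> 'w \<Rightarrow> (real \<times> real) set) \<Rightarrow> ('w \<Rightarrow> real \<Rightarrow> 'a set \<Rightarrow> nat) \<Rightarrow> bool" where
  "urn_pre M E \<alpha> enum P Npre \<longleftrightarrow>
     (AE \<omega> in M. \<forall>t. \<forall>e\<in>E.
        Npre \<omega> t e = 1 + (\<Sum>v\<in>e. card {(s, u) \<in> P v \<omega>. 0 \<le> s \<and> s < t \<and>
                                        selects E \<alpha> enum v (Npre \<omega> s) u e}))"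

text \<open>N_t (right-continuous version), obtained from N_{t-}.\<close>

definition urn_N ::
  "'a set set \<Rightarrow> real \<Rightarrow> ('a \<Rightarrow> nat \<Rightarrow> 'a set) \<Rightarrow>
   ('a \<Rightarrow> 'w \<Rightarrow> (real \<times> real) set) \<Rightarrow> ('w \<Rightarrow> real \<Rightarrow> 'a set \<Rightarrow> nat) \<Rightarrow> 'w \<Rightarrow> real \<Rightarrow> 'a set \<Rightarrow> nat"
  where
  "urn_N E \<alpha> enum P Npre \<omega> t e =
     1 + (\<Sum>v\<in>e. card {(s, u) \<in> P v \<omega>. 0 \<le> s \<and> s \<le> t \<and>
                                 selects E \<alpha> enum v (Npre \<omega> s) u e})"

definition cluster :: "('w \<Rightarrow> real \<Rightarrow> 'a set \<Rightarrow> nat) \<Rightarrow> 'w \<Rightarrow> 'a set \<Rightarrow> ereal set" where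
  "cluster N \<omega> e =
     {Liminf at_top (\<lambda>t::real. ereal (real (N \<omega> t e) / t)) ..
      Limsup at_top (\<lambda>t::real. ereal (real (N \<omega> t e) / t))}"

end

theory Submission
  imports Defs "HOL-Real_Asymp.Real_Asymp"
begin

text \<open>Cut time into the slots \<open>[n\<^sup>2, (n+1)\<^sup>2)\<close>. Their lengths \<open>2n+1\<close> grow, so by Chernoff bounds
  and Borel-Cantelli the atoms of every vertex almost surely fill every late window (a slot times a
  rational interval of marks) in proportion to its area; yet the lengths are negligible against \<open>n\<^sup>2\<close>, so when all
  edges at an endpoint of \<open>e\<close> grow linearly, the policies at that endpoint are almost constant
  within a slot. Counting slot by slot the atoms that reinforce \<open>e\<close> then bounds \<open>X\<^sub>t(e)\<close>
  asymptotically by the sum over \<open>v \<in> e\<close> of the limiting policies of \<open>e\<close> at \<open>v\<close>. The rivals of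
  \<open>e\<close> grow at rates within a factor \<open>\<rho>\<close> of \<open>\<mu>\<close>, so comparing these policies with the
  equilibrium equation for \<open>\<mu>(e)\<close> yields \<open>x \<le> max 1 ((\<rho> x)\<^sup>\<alpha>)\<close> for \<open>x = X\<^sub>+(e) / \<mu>(e)\<close>,
  hence \<open>x \<le> \<rho>\<^bsup>\<alpha>/(1-\<alpha>)\<^esup> \<le> \<rho>\<^bsup>2\<alpha>\<^esup>\<close>; symmetrically for \<open>X\<^sub>-(e)\<close>.\<close>

section \<open>Policies\<close>

lemma pw_nonneg: "0 \<le> x \<Longrightarrow> 0 \<le> pw x a"
  by (simp add: pw_def)

lemma pw_pos_eq_powr: "0 < x \<Longrightarrow> pw x a = x powr a"
  by (simp add: pw_def)

lemma pol_nonneg: "0 \<le> pol E \<alpha> v N f"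
  unfolding pol_def by (intro divide_nonneg_nonneg sum_nonneg pw_nonneg) auto

lemma sum_pol_enum_le_1:
  assumes fin: "finite (Ev E v)" and bij: "bij_betw (enum v) {..<card (Ev E v)} (Ev E v)"
    and i: "i \<le> card (Ev E v)"
  shows "(\<Sum>j<i. pol E \<alpha> v N (enum v j)) \<le> 1"
proof -
  have "(\<Sum>j<i. pol E \<alpha> v N (enum v j)) \<le> (\<Sum>j<card (Ev E v). pol E \<alpha> v N (enum v j))"
    using i by (intro sum_mono2) (auto simp: pol_nonneg)
  also have "\<dots> = (\<Sum>f\<in>Ev E v. pol E \<alpha> v N f)"
    using sum.reindex_bij_betw[OF bij, of "pol E \<alpha> v N"] by simp
  also have "\<dots> = (\<Sum>f\<in>Ev E v. pw (real (N f)) \<alpha>) / (\<Sum>f\<in>Ev E v. pw (real (N f)) \<alpha>)"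
    unfolding pol_def sum_divide_distrib by (rule refl)
  also have "\<dots> \<le> 1" by (simp add: divide_le_eq_1)
  finally show ?thesis .
qed

lemma selects_mark_bounds:
  assumes "finite (Ev E v)" and "bij_betw (enum v) {..<card (Ev E v)} (Ev E v)"
    and "selects E \<alpha> enum v N u f"
  shows "0 < u" "u \<le> 1"
proof -
  obtain i where i: "i < card (Ev E v)" "(\<Sum>j<i. pol E \<alpha> v N (enum v j)) < u"
     "u \<le> (\<Sum>j<Suc i. pol E \<alpha> v N (enum v j))"
    using assms(3) unfolding selects_def lessThan_Suc_atMost by blast
  have "0 \<le> (\<Sum>j<i. pol E \<alpha> v N (enum v j))" by (intro sum_nonneg pol_nonneg)
  then show "0 < u" using i by linarith
  show "u \<le> 1" using i sum_pol_enum_le_1[where enum=enum, OF assms(1,2), of "Suc i" \<alpha> N] by simp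
qed

lemma selects_iff_interval:
  assumes bij: "bij_betw (enum v) {..<card (Ev E v)} (Ev E v)"
    and i: "i < card (Ev E v)" "enum v i = f"
  shows "selects E \<alpha> enum v N u f \<longleftrightarrow>
     (\<Sum>j<i. pol E \<alpha> v N (enum v j)) < u \<and> u \<le> (\<Sum>j<i. pol E \<alpha> v N (enum v j)) + pol E \<alpha> v N f"
proof -
  have unique: "i' = i" if "i' < card (Ev E v)" "enum v i' = f" for i'
    using bij_betw_imp_inj_on[OF bij] that i by (auto simp: inj_on_def)
  have "(\<Sum>j\<le>i. pol E \<alpha> v N (enum v j)) = (\<Sum>j<i. pol E \<alpha> v N (enum v j)) + pol E \<alpha> v N f"
    using i by (simp add: lessThan_Suc_atMost[symmetric])
  then show ?thesis
    unfolding selects_def using i unique by (metis (no_types, lifting))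
qed

lemma ratio_to_sum_mono:
  fixes y Y S S' :: real
  assumes "0 \<le> y" "y \<le> Y" "0 < Y" "0 \<le> S'" "S' \<le> S"
  shows "y / (y + S) \<le> Y / (Y + S')"
proof -
  have "y / (y + S) \<le> Y / (Y + S)"
  proof (cases "y + S = 0")
    case False
    then have "0 < y + S" using assms by linarith
    then show ?thesis using assms by (simp add: divide_simps) (simp add: algebra_simps mult_left_mono)
  qed (use assms in simp)
  also have "\<dots> \<le> Y / (Y + S')" using assms by (intro divide_left_mono) auto
  finally show ?thesis .
qed

lemma pw_ratio_bound:
  fixes x x' \<eta> \<alpha> :: real
  assumes "0 < x" "x \<le> x'" "x' \<le> (1 + \<eta>) * x" "0 \<le> \<eta>" "0 \<le> \<alpha>" "\<alpha> \<le> 1"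
  shows "pw x \<alpha> \<le> pw x' \<alpha>" "pw x' \<alpha> \<le> (1 + \<eta>) * pw x \<alpha>"
proof -
  have x': "0 < x'" using assms by linarith
  show "pw x \<alpha> \<le> pw x' \<alpha>" using assms x' by (simp add: pw_def powr_mono2)
  have "(1 + \<eta>) powr \<alpha> \<le> (1 + \<eta>) powr 1" using assms by (intro powr_mono) auto
  have "pw x' \<alpha> \<le> ((1 + \<eta>) * x) powr \<alpha>" using assms x' by (simp add: pw_def powr_mono2)
  also have "\<dots> = (1 + \<eta>) powr \<alpha> * x powr \<alpha>" using assms by (simp add: powr_mult)
  also have "\<dots> \<le> (1 + \<eta>) * x powr \<alpha>"
    using \<open>(1 + \<eta>) powr \<alpha> \<le> (1 + \<eta>) powr 1\<close> assms by (intro mult_right_mono) auto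
  finally show "pw x' \<alpha> \<le> (1 + \<eta>) * pw x \<alpha>" using assms by (simp add: pw_def)
qed

lemma pol_ratio_bound:
  fixes N N' :: "'a set \<Rightarrow> nat"
  assumes fin: "finite (Ev E v)" and f: "f \<in> Ev E v"
    and N: "\<And>g. g \<in> Ev E v \<Longrightarrow> 1 \<le> N g \<and> N g \<le> N' g \<and> real (N' g) \<le> (1 + \<eta>) * real (N g)"
    and \<eta>: "0 \<le> \<eta>" and \<alpha>: "0 \<le> \<alpha>" "\<alpha> \<le> 1"
  shows "pol E \<alpha> v N' f \<le> (1 + \<eta>) * pol E \<alpha> v N f" "pol E \<alpha> v N f \<le> (1 + \<eta>) * pol E \<alpha> v N' f"
proof -
  let ?a = "\<lambda>g. pw (real (N g)) \<alpha>" and ?a' = "\<lambda>g. pw (real (N' g)) \<alpha>"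
  let ?S = "\<Sum>g\<in>Ev E v. ?a g" and ?S' = "\<Sum>g\<in>Ev E v. ?a' g"
  have a: "?a g \<le> ?a' g" "?a' g \<le> (1 + \<eta>) * ?a g" "0 < ?a g" if "g \<in> Ev E v" for g
  proof -
    have "0 < real (N g)" "real (N g) \<le> real (N' g)" "real (N' g) \<le> (1 + \<eta>) * real (N g)"
      using N[OF that] by auto
    from pw_ratio_bound[OF this \<eta> \<alpha>] show "?a g \<le> ?a' g" "?a' g \<le> (1 + \<eta>) * ?a g" by auto
    show "0 < ?a g" using N[OF that] by (simp add: pw_def)
  qed
  have S: "?S \<le> ?S'" "?S' \<le> (1 + \<eta>) * ?S"
    unfolding sum_distrib_left by (intro sum_mono a; assumption)+
  have S_pos: "0 < ?S" using fin f a(3) by (intro sum_pos2[of _ f]) (auto intro: less_imp_le)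
  have "pol E \<alpha> v N' f = ?a' f / ?S'" by (simp add: pol_def)
  also have "\<dots> \<le> ((1 + \<eta>) * ?a f) / ?S"
    using S S_pos a[OF f] by (intro frac_le) auto
  finally show "pol E \<alpha> v N' f \<le> (1 + \<eta>) * pol E \<alpha> v N f" by (simp add: pol_def)
  have "pol E \<alpha> v N f = ?a f / ?S" by (simp add: pol_def)
  also have "\<dots> \<le> ?a' f / (?S' / (1 + \<eta>))"
    using S S_pos a[OF f] \<eta> by (intro frac_le) (auto simp: field_simps)
  also have "\<dots> = (1 + \<eta>) * (?a' f / ?S')" using \<eta> by simp
  finally show "pol E \<alpha> v N f \<le> (1 + \<eta>) * pol E \<alpha> v N' f" by (simp add: pol_def)
qed

section \<open>Slots and windows\<close>

definition slot :: "nat \<Rightarrow> real set" where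
  "slot n = {real n ^ 2..<real (Suc n) ^ 2}"

lemma square_in_slot: "real n ^ 2 \<in> slot n"
  unfolding slot_def by (auto intro!: power_strict_mono)

lemma slot_subset: "slot n \<subseteq> {0..real (Suc n) ^ 2}"
  by (auto simp: slot_def simp del: of_nat_Suc intro: order_trans[OF zero_le_power2[of "real n"]])

definition window :: "nat \<Rightarrow> real \<Rightarrow> real \<Rightarrow> (real \<times> real) set" where
  "window n c d = slot n \<times> {c<..d}"

lemma mem_window: "(s, u) \<in> window n c d \<longleftrightarrow> s \<in> slot n \<and> c < u \<and> u \<le> d"
  by (simp add: window_def)

lemma window_subset_box: "0 \<le> c \<Longrightarrow> d \<le> 1 \<Longrightarrow> window n c d \<subseteq> {0..real (Suc n) ^ 2} \<times> {0..1}"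
  by (auto simp: window_def slot_def simp del: of_nat_Suc intro: order_trans[OF zero_le_power2[of "real n"]])

lemma window_mono: "c' \<le> c \<Longrightarrow> d \<le> d' \<Longrightarrow> window n c d \<subseteq> window n c' d'"
  by (auto simp: window_def)

lemma window_empty: "d \<le> c \<Longrightarrow> window n c d = {}"
  by (auto simp: window_def)

definition window_count_close :: "(real \<times> real) set \<Rightarrow> nat \<Rightarrow> real \<Rightarrow> real \<Rightarrow> real \<Rightarrow> bool" where
  "window_count_close Q n c d \<epsilon> \<longleftrightarrow>
     \<bar>real (card (Q \<inter> window n c d)) - (2 * real n + 1) * (d - c)\<bar> < \<epsilon> * ((2 * real n + 1) * (d - c))"

lemma window_count_closeD:
  assumes "window_count_close Q n c d \<epsilon>"
  shows "real (card (Q \<inter> window n c d)) \<le> (1 + \<epsilon>) * ((2 * real n + 1) * (d - c))"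
    "(1 - \<epsilon>) * ((2 * real n + 1) * (d - c)) \<le> real (card (Q \<inter> window n c d))"
  using assms unfolding window_count_close_def by (simp_all add: abs_less_iff algebra_simps)

lemma card_window_le_of_grid:
  fixes Q :: "(real \<times> real) set" and m :: nat
  assumes fin: "finite (Q \<inter> window n 0 1)" and m: "0 < m"
    and grid: "\<And>k l. k < l \<Longrightarrow> l \<le> m \<Longrightarrow> window_count_close Q n (real k / m) (real l / m) (1 / m)"
    and xy: "0 \<le> x" "x \<le> y" "y \<le> 1"
  shows "real (card (Q \<inter> window n x y)) \<le> (1 + 1 / m) * (2 * real n + 1) * (y - x + 2 / m)"
proof -
  define k where "k = nat \<lfloor>real m * x\<rfloor>"
  define l where "l = nat \<lceil>real m * y\<rceil>"
  have k: "real k / m \<le> x" "x < real k / m + 1 / m"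
    using xy m by (auto simp: k_def field_simps of_nat_nat) linarith+
  have l: "y \<le> real l / m" "real l / m < y + 1 / m" "l \<le> m"
    using xy m by (auto simp: l_def field_simps of_nat_nat ceiling_le_iff) linarith+
  have "window n (real k / m) (real l / m) \<subseteq> window n 0 1"
    using l(3) m by (intro window_mono) auto
  then have "real (card (Q \<inter> window n x y)) \<le> real (card (Q \<inter> window n (real k / m) (real l / m)))"
    using k(1) l(1) window_mono[of "real k / m" x y "real l / m" n]
    by (intro of_nat_mono card_mono finite_subset[OF _ fin]) auto
  also have "\<dots> \<le> (1 + 1 / m) * ((2 * real n + 1) * (real l / m - real k / m))"
  proof (cases "k < l")
    case False
    then have "real l / m \<le> real k / m" using m by (simp add: divide_right_mono)
    then show ?thesis using window_empty k(1) l(1) xy m by auto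
  qed (use window_count_closeD(1)[OF grid] l(3) in simp)
  also have "\<dots> \<le> (1 + 1 / m) * (2 * real n + 1) * (y - x + 2 / m)"
    using k l by (simp add: mult.assoc mult_left_mono)
  finally show ?thesis .
qed

lemma card_window_ge_of_grid:
  fixes Q :: "(real \<times> real) set" and m :: nat
  assumes fin: "finite (Q \<inter> window n 0 1)" and m: "0 < m"
    and grid: "\<And>k l. k < l \<Longrightarrow> l \<le> m \<Longrightarrow> window_count_close Q n (real k / m) (real l / m) (1 / m)"
    and xy: "0 \<le> x" "y \<le> 1"
  shows "(1 - 1 / m) * (2 * real n + 1) * (y - x - 2 / m) \<le> real (card (Q \<inter> window n x y))"
proof -
  define k where "k = nat \<lceil>real m * x\<rceil>"
  define l where "l = nat \<lfloor>real m * y\<rfloor>"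
  have k: "x \<le> real k / m" "real k / m < x + 1 / m"
    using xy m by (auto simp: k_def field_simps of_nat_nat) linarith+
  have "real_of_int \<lfloor>real m * y\<rfloor> \<le> real l"
    unfolding l_def by (cases "0 \<le> \<lfloor>real m * y\<rfloor>") (simp_all add: of_nat_nat)
  then have "(real m * y - 1) / m < real l / m"
    using m floor_correct[of "real m * y"] by (intro divide_strict_right_mono) linarith+
  then have l: "y - 1 / m < real l / m"
    using m by (simp add: diff_divide_distrib)
  have m1: "0 \<le> 1 - 1 / real m" using m by simp
  show ?thesis
  proof (cases "k < l")
    case True
    then have "0 \<le> \<lfloor>real m * y\<rfloor>" unfolding l_def by linarith
    then have "real l \<le> real m * y" by (simp add: l_def of_nat_nat)
    then have l_le: "real l / m \<le> y" using m by (simp add: field_simps)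
    have "\<lfloor>real m * y\<rfloor> \<le> \<lfloor>real m\<rfloor>" using xy(2) m by (intro floor_mono) (simp add: mult_left_le)
    then have l': "real l / m \<le> y" "l \<le> m" using l_le by (simp_all add: l_def)
    have "(1 - 1 / m) * (2 * real n + 1) * (y - x - 2 / m)
        \<le> (1 - 1 / m) * ((2 * real n + 1) * (real l / m - real k / m))"
      using k l m1 by (simp add: mult.assoc mult_left_mono)
    also have "\<dots> \<le> real (card (Q \<inter> window n (real k / m) (real l / m)))"
      using window_count_closeD(2)[OF grid[OF True l'(2)]] .
    also have "\<dots> \<le> real (card (Q \<inter> window n x y))"
      using k(1) l'(1) xy window_mono[of x "real k / m" "real l / m" y n] window_mono[of 0 x y 1 n]
      by (intro of_nat_mono card_mono finite_subset[OF _ fin]) auto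
    finally show ?thesis .
  next
    case False
    then have "real l / m \<le> real k / m" by (simp add: divide_right_mono)
    then have "y - x - 2 / m < 0" using k l by linarith
    then have "(1 - 1 / m) * (2 * real n + 1) * (y - x - 2 / m) \<le> 0"
      using m1 by (intro mult_nonneg_nonpos) auto
    then show ?thesis using of_nat_0_le_iff order_trans by blast
  qed
qed

lemma eventually_ge_square:
  assumes "\<forall>\<^sub>F s in at_top. Q s"
  shows "\<forall>\<^sub>F n in sequentially. \<forall>s \<ge> real n ^ 2. Q (s :: real)"
proof -
  obtain T where T: "\<And>s. T \<le> s \<Longrightarrow> Q s" using assms unfolding eventually_at_top_linorder by blast
  have "\<forall>\<^sub>F n in sequentially. T \<le> real n"
    using filterlim_real_sequentially unfolding filterlim_at_top by blast
  then show ?thesis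
  proof eventually_elim
    case (elim n)
    have "real n \<le> real n ^ 2" by (cases n) (auto simp: power2_eq_square)
    show ?case
    proof (intro allI impI)
      fix s assume "real n ^ 2 \<le> s"
      then show "Q s" using elim \<open>real n \<le> real n ^ 2\<close> by (intro T) linarith
    qed
  qed
qed

lemma sum_odd_eq_square_diff: "a \<le> b \<Longrightarrow> (\<Sum>n\<in>{a..<b}. 2 * real n + 1) = real b ^ 2 - real a ^ 2"
proof (induction b rule: dec_induct)
  case (step b)
  then show ?case by (simp add: power2_eq_square algebra_simps)
qed simp

lemma sum_le_of_slot_bound:
  fixes w :: "nat \<Rightarrow> real"
  assumes w: "\<And>n. n0 \<le> n \<Longrightarrow> w n \<le> \<beta> * (2 * real n + 1)" and \<beta>: "0 \<le> \<beta>" and M: "n0 \<le> M"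
  shows "(\<Sum>n<M. w n) \<le> \<bar>\<Sum>n<n0. w n\<bar> + \<beta> * real M ^ 2"
proof -
  have "(\<Sum>n<M. w n) = (\<Sum>n<n0. w n) + (\<Sum>n\<in>{n0..<M}. w n)"
    using M by (simp add: lessThan_atLeast0 sum.atLeastLessThan_concat)
  also have "(\<Sum>n\<in>{n0..<M}. w n) \<le> (\<Sum>n\<in>{n0..<M}. \<beta> * (2 * real n + 1))"
    by (intro sum_mono w) auto
  also have "\<dots> = \<beta> * (real M ^ 2 - real n0 ^ 2)"
    using M by (simp add: sum_distrib_left[symmetric] sum_odd_eq_square_diff)
  finally show ?thesis using \<beta> by (smt (verit) mult_nonneg_nonneg zero_le_power2 right_diff_distrib)
qed

lemma sum_ge_of_slot_bound:
  fixes w :: "nat \<Rightarrow> real"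
  assumes w: "\<And>n. n0 \<le> n \<Longrightarrow> \<beta> * (2 * real n + 1) \<le> w n" and w_nonneg: "\<And>n. 0 \<le> w n" and M: "n0 \<le> M"
  shows "\<beta> * real M ^ 2 - \<beta> * real n0 ^ 2 \<le> (\<Sum>n<M. w n)"
proof -
  have "\<beta> * real M ^ 2 - \<beta> * real n0 ^ 2 = (\<Sum>n\<in>{n0..<M}. \<beta> * (2 * real n + 1))"
    using M by (simp add: sum_distrib_left[symmetric] sum_odd_eq_square_diff right_diff_distrib)
  also have "\<dots> \<le> (\<Sum>n\<in>{n0..<M}. w n)" by (intro sum_mono w) auto
  also have "\<dots> \<le> (\<Sum>n<n0. w n) + (\<Sum>n\<in>{n0..<M}. w n)" using w_nonneg by (simp add: sum_nonneg)
  also have "\<dots> = (\<Sum>n<M. w n)"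
    using M by (simp add: lessThan_atLeast0 sum.atLeastLessThan_concat)
  finally show ?thesis .
qed

lemma Limsup_div_le_of_slot_bound:
  fixes F :: "real \<Rightarrow> real" and w :: "nat \<Rightarrow> real"
  assumes w: "\<forall>\<^sub>F n in sequentially. w n \<le> \<beta> * (2 * real n + 1)" and \<beta>: "0 \<le> \<beta>"
    and F: "\<And>t. 0 \<le> t \<Longrightarrow> F t \<le> 1 + (\<Sum>n<nat \<lfloor>sqrt t\<rfloor> + 1. w n)"
  shows "Limsup at_top (\<lambda>t. ereal (F t / t)) \<le> ereal \<beta>"
proof (rule ereal_le_epsilon2)
  fix \<delta> :: real assume \<delta>: "0 < \<delta>"
  obtain n0 where n0: "\<And>n. n0 \<le> n \<Longrightarrow> w n \<le> \<beta> * (2 * real n + 1)"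
    using w unfolding eventually_sequentially by blast
  define C where "C = \<bar>\<Sum>n<n0. w n\<bar>"
  have "((\<lambda>t. (1 + C + \<beta> * (sqrt t + 1) ^ 2) / t) \<longlongrightarrow> \<beta>) at_top" by real_asymp
  then have "\<forall>\<^sub>F t in at_top. (1 + C + \<beta> * (sqrt t + 1) ^ 2) / t < \<beta> + \<delta>"
    using \<delta> by (intro order_tendstoD(2)) auto
  then have "\<forall>\<^sub>F t in at_top. ereal (F t / t) \<le> ereal \<beta> + ereal \<delta>"
    using eventually_ge_at_top[of "max 1 (real n0 ^ 2)"]
  proof eventually_elim
    case (elim t)
    define M where "M = nat \<lfloor>sqrt t\<rfloor> + 1"
    have t: "1 \<le> t" "real n0 ^ 2 \<le> t" using elim(2) by auto
    have "real n0 \<le> sqrt t" using t(2) real_le_rsqrt by blast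
    then have M: "n0 \<le> M" "real M \<le> sqrt t + 1" unfolding M_def using t by linarith+
    have "F t \<le> 1 + (\<Sum>n<M. w n)" using F[of t] t unfolding M_def by simp
    moreover have "real M ^ 2 \<le> (sqrt t + 1) ^ 2" using M(2) by (intro power_mono) auto
    then have "\<beta> * real M ^ 2 \<le> \<beta> * (sqrt t + 1) ^ 2" using \<beta> by (rule mult_left_mono)
    ultimately have "F t \<le> 1 + C + \<beta> * (sqrt t + 1) ^ 2"
      using sum_le_of_slot_bound[OF n0 \<beta> M(1)] unfolding C_def by linarith
    then have "F t / t \<le> (1 + C + \<beta> * (sqrt t + 1) ^ 2) / t" using t by (simp add: divide_right_mono)
    then show ?case using elim(1) by simp
  qed
  then show "Limsup at_top (\<lambda>t. ereal (F t / t)) \<le> ereal \<beta> + ereal \<delta>" by (rule Limsup_bounded)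
qed

lemma Liminf_div_ge_of_slot_bound:
  fixes F :: "real \<Rightarrow> real" and w :: "nat \<Rightarrow> real"
  assumes w: "\<forall>\<^sub>F n in sequentially. \<beta> * (2 * real n + 1) \<le> w n" and w_nonneg: "\<And>n. 0 \<le> w n"
    and F: "\<And>t. 0 \<le> t \<Longrightarrow> 1 + (\<Sum>n<nat \<lfloor>sqrt t\<rfloor>. w n) \<le> F t"
  shows "ereal \<beta> \<le> Liminf at_top (\<lambda>t. ereal (F t / t))"
proof (cases "\<beta> \<le> 0")
  case True
  have "\<forall>\<^sub>F t in at_top. ereal \<beta> \<le> ereal (F t / t)"
    using eventually_gt_at_top[of 0]
  proof eventually_elim
    case (elim t)
    have "0 \<le> (\<Sum>n<nat \<lfloor>sqrt t\<rfloor>. w n)" by (intro sum_nonneg w_nonneg)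
    then have "0 \<le> F t" using F[of t] elim by linarith
    then have "0 \<le> F t / t" using elim by simp
    then show ?case using True by simp
  qed
  then show ?thesis by (rule Liminf_bounded)
next
  case False
  then have \<beta>: "0 \<le> \<beta>" by simp
  show ?thesis
  proof (rule ereal_le_epsilon2)
    fix \<delta> :: real assume \<delta>: "0 < \<delta>"
    obtain n0 where n0: "\<And>n. n0 \<le> n \<Longrightarrow> \<beta> * (2 * real n + 1) \<le> w n"
      using w unfolding eventually_sequentially by blast
    have "((\<lambda>t. (\<beta> * (sqrt t - 1) ^ 2 - \<beta> * real n0 ^ 2) / t) \<longlongrightarrow> \<beta>) at_top" by real_asymp
    then have "\<forall>\<^sub>F t in at_top. \<beta> - \<delta> < (\<beta> * (sqrt t - 1) ^ 2 - \<beta> * real n0 ^ 2) / t"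
      using \<delta> by (intro order_tendstoD(1)) auto
    then have "\<forall>\<^sub>F t in at_top. ereal (\<beta> - \<delta>) \<le> ereal (F t / t)"
      using eventually_ge_at_top[of "(real n0 + 1) ^ 2"]
    proof eventually_elim
      case (elim t)
      define M where "M = nat \<lfloor>sqrt t\<rfloor>"
      have "1 \<le> (real n0 + 1) ^ 2" by simp
      then have t: "1 \<le> t" using elim(2) by linarith
      have "real n0 + 1 \<le> sqrt t" using elim(2) real_le_rsqrt by blast
      then have M: "n0 \<le> M" "sqrt t - 1 \<le> real M" "0 \<le> sqrt t - 1" unfolding M_def using t by linarith+
      have "(sqrt t - 1) ^ 2 \<le> real M ^ 2" using M(2,3) by (intro power_mono) auto
      then have "\<beta> * (sqrt t - 1) ^ 2 - \<beta> * real n0 ^ 2 \<le> \<beta> * real M ^ 2 - \<beta> * real n0 ^ 2"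
        using mult_left_mono[OF _ \<beta>] by simp
      also have "\<dots> \<le> F t" using sum_ge_of_slot_bound[OF n0 w_nonneg M(1)] F[of t] t unfolding M_def by simp
      finally have "(\<beta> * (sqrt t - 1) ^ 2 - \<beta> * real n0 ^ 2) / t \<le> F t / t" using t by (simp add: divide_right_mono)
      then show ?case using elim(1) by simp
    qed
    then have "ereal (\<beta> - \<delta>) \<le> Liminf at_top (\<lambda>t. ereal (F t / t))" by (rule Liminf_bounded)
    then have "ereal (\<beta> - \<delta>) + ereal \<delta> \<le> Liminf at_top (\<lambda>t. ereal (F t / t)) + ereal \<delta>"
      by (rule add_right_mono)
    then show "ereal \<beta> \<le> Liminf at_top (\<lambda>t. ereal (F t / t)) + ereal \<delta>" by simp
  qed
qed

section \<open>Concentration of Poisson counts\<close>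

lemma poisson_tail_bound:
  fixes X :: "'w \<Rightarrow> nat" and l y :: real
  assumes "prob_space M" and X: "X \<in> measurable M (count_space UNIV)"
    and dist: "\<And>k. measure M {\<omega>\<in>space M. X \<omega> = k} = l ^ k / fact k * exp (- l)"
    and l: "0 \<le> l" and y: "0 < y" and Q: "\<And>k. Q k \<Longrightarrow> 0 \<le> (real k - y * l) * ln y"
  shows "measure M {\<omega>\<in>space M. Q (X \<omega>)} \<le> exp (- l * (y * ln y - y + 1))"
proof -
  interpret prob_space M by fact
  define A where "A k = {\<omega>\<in>space M. X \<omega> = k \<and> Q k}" for k
  have "A k \<in> sets M" for k
    using measurable_sets[OF X, of "{k}"] by (cases "Q k") (auto simp: A_def vimage_def Int_def conj_commute)
  then have "(\<lambda>k. measure M (A k)) sums measure M (\<Union>k. A k)"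
    by (intro finite_measure_UNION) (auto simp: disjoint_family_on_def A_def)
  moreover have "(\<Union>k. A k) = {\<omega>\<in>space M. Q (X \<omega>)}" by (auto simp: A_def)
  ultimately have sums_A: "(\<lambda>k. measure M (A k)) sums measure M {\<omega>\<in>space M. Q (X \<omega>)}" by simp
  define c where "c = exp (- l) / y powr (y * l)"
  have sums_exp: "(\<lambda>k. (l * y) ^ k / fact k * c) sums (exp (l * y) * c)"
    using sums_mult2[OF exp_converges[of "l * y"], of c] by (simp add: divide_inverse mult_ac)
  have A_le: "measure M (A k) \<le> (l * y) ^ k / fact k * c" for k
  proof (cases "Q k")
    case True
    \<comment> \<open>Chernoff's trick: on the event, \<open>y ^ k / y powr (y * l) \<ge> 1\<close>.\<close>
    have "y powr (real k - y * l) = exp ((real k - y * l) * ln y)" using y by (simp add: powr_def)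
    then have "1 \<le> y powr (real k - y * l)" using Q[OF True] by simp
    also have "y powr (real k - y * l) = y ^ k / y powr (y * l)" using y by (simp add: powr_diff powr_realpow)
    finally have "l ^ k / fact k * exp (- l) * 1 \<le> l ^ k / fact k * exp (- l) * (y ^ k / y powr (y * l))"
      using l by (intro mult_left_mono) auto
    then show ?thesis using True by (simp add: A_def dist c_def power_mult_distrib mult_ac)
  qed (use l y in \<open>simp add: A_def c_def\<close>)
  have "measure M {\<omega>\<in>space M. Q (X \<omega>)} \<le> exp (l * y) * c"
    by (rule sums_le[OF A_le sums_A sums_exp])
  also have "\<dots> = exp (- l * (y * ln y - y + 1))"
    using y by (simp add: c_def powr_def exp_diff[symmetric] exp_add[symmetric] algebra_simps)
  finally show ?thesis .
qed

lemma ln_entropy_pos: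
  fixes y :: real
  assumes "0 < y" "y \<noteq> 1"
  shows "0 < y * ln y - y + 1"
proof -
  have "ln (1 / y) \<le> 1 / y - 1" by (rule ln_le_minus_one) (use assms in simp)
  moreover have "ln (1 / y) \<noteq> 1 / y - 1" using ln_eq_minus_one[of "1 / y"] assms by auto
  ultimately have "- ln y < 1 / y - 1" using assms by (simp add: ln_div)
  then have "y * (- ln y) < y * (1 / y - 1)" by (rule mult_strict_left_mono) (use assms in simp)
  then show ?thesis using assms by (simp add: algebra_simps)
qed

lemma AE_eventually_poisson_tail_avoided:
  fixes X :: "nat \<Rightarrow> 'w \<Rightarrow> nat" and mean :: "nat \<Rightarrow> real"
  assumes M: "prob_space M" and X: "\<And>n. X n \<in> measurable M (count_space UNIV)"
    and dist: "\<And>n k. measure M {\<omega>\<in>space M. X n \<omega> = k} = mean n ^ k / fact k * exp (- mean n)"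
    and c: "0 < c" and growth: "\<And>n. c * real n \<le> mean n" and y: "0 < y" "y \<noteq> 1"
  shows "AE \<omega> in M. \<forall>\<^sub>F n in sequentially. (real (X n \<omega>) - y * mean n) * ln y < 0"
proof -
  interpret prob_space M by fact
  have mean_nonneg: "0 \<le> mean n" for n
    using growth[of n] c by (meson mult_nonneg_nonneg of_nat_0_le_iff order_trans less_imp_le)
  define h where "h = y * ln y - y + 1"
  have h: "0 < h" unfolding h_def by (rule ln_entropy_pos[OF y])
  define A where "A n = {\<omega>\<in>space M. 0 \<le> (real (X n \<omega>) - y * mean n) * ln y}" for n
  have A_sets: "A n \<in> sets M" for n
  proof -
    have "{\<omega>\<in>space M. (\<lambda>k. 0 \<le> (real k - y * mean n) * ln y) (X n \<omega>)} \<in> sets M"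
      using X[of n] by measurable
    then show ?thesis by (simp add: A_def)
  qed
  have "measure M (A n) \<le> exp (- c * h) ^ n" for n
  proof -
    have "measure M (A n) \<le> exp (- mean n * h)"
      unfolding A_def h_def
      by (rule poisson_tail_bound[where Q = "\<lambda>k. 0 \<le> (real k - y * mean n) * ln y",
            OF M X dist mean_nonneg y(1)])
    also have "\<dots> \<le> exp (real n * (- c * h))"
      using mult_right_mono[OF growth[of n] less_imp_le[OF h]] by (simp add: mult_ac)
    also have "\<dots> = exp (- c * h) ^ n" by (rule exp_of_nat_mult)
    finally show ?thesis .
  qed
  then have "summable (\<lambda>n. measure M (A n))"
    by (intro summable_comparison_test'[OF summable_geometric[of "exp (- c * h)"]]) (use c h in auto)
  then have "AE \<omega> in M. \<forall>\<^sub>F n in sequentially. \<omega> \<in> space M - A n"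
    by (intro borel_cantelli_AE1) (auto simp: A_sets emeasure_eq_measure)
  then show ?thesis
  proof (rule AE_mp, intro AE_I2 impI)
    fix \<omega> assume "\<omega> \<in> space M" "\<forall>\<^sub>F n in sequentially. \<omega> \<in> space M - A n"
    then show "\<forall>\<^sub>F n in sequentially. (real (X n \<omega>) - y * mean n) * ln y < 0"
      by (elim eventually_mono) (simp add: A_def not_le)
  qed
qed

lemma AE_eventually_poisson_concentrated:
  fixes X :: "nat \<Rightarrow> 'w \<Rightarrow> nat" and mean :: "nat \<Rightarrow> real"
  assumes M: "prob_space M" and X: "\<And>n. X n \<in> measurable M (count_space UNIV)"
    and dist: "\<And>n k. measure M {\<omega>\<in>space M. X n \<omega> = k} = mean n ^ k / fact k * exp (- mean n)"
    and c: "0 < c" and growth: "\<And>n. c * real n \<le> mean n" and \<epsilon>: "0 < \<epsilon>" "\<epsilon> < 1"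
  shows "AE \<omega> in M. \<forall>\<^sub>F n in sequentially. \<bar>real (X n \<omega>) - mean n\<bar> < \<epsilon> * mean n"
proof -
  have ln: "0 < ln (1 + \<epsilon>)" "ln (1 - \<epsilon>) < 0" using \<epsilon> by auto
  have "AE \<omega> in M. \<forall>\<^sub>F n in sequentially. (real (X n \<omega>) - (1 + \<epsilon>) * mean n) * ln (1 + \<epsilon>) < 0"
    "AE \<omega> in M. \<forall>\<^sub>F n in sequentially. (real (X n \<omega>) - (1 - \<epsilon>) * mean n) * ln (1 - \<epsilon>) < 0"
    using \<epsilon> by (intro AE_eventually_poisson_tail_avoided[OF M X dist c growth]; simp)+
  then show ?thesis
  proof eventually_elim
    case (elim \<omega>)
    from elim(1,2) show ?case
    proof eventually_elim
      case (elim n)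
      then have "real (X n \<omega>) - (1 + \<epsilon>) * mean n < 0" "0 < real (X n \<omega>) - (1 - \<epsilon>) * mean n"
        using ln by (auto simp: mult_less_0_iff)
      then show ?case by (simp add: abs_less_iff algebra_simps)
    qed
  qed
qed

lemma window_in_ppp_domain:
  assumes "0 \<le> c" "c \<le> d" "d \<le> 1"
  shows "window n c d \<in> ppp_domain" "measure lborel (window n c d) = (2 * real n + 1) * (d - c)"
proof -
  have "real n ^ 2 \<le> real (Suc n) ^ 2" by (simp add: power_mono)
  then have "emeasure (lborel \<Otimes>\<^sub>M lborel) (window n c d) = ennreal ((real (Suc n) ^ 2 - real n ^ 2) * (d - c))"
    unfolding window_def slot_def using assms by (subst lborel.emeasure_pair_measure_Times) (auto simp: ennreal_mult)
  also have "real (Suc n) ^ 2 - real n ^ 2 = 2 * real n + 1" by (simp add: power2_eq_square algebra_simps)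
  finally have \<mu>: "emeasure lborel (window n c d) = ennreal ((2 * real n + 1) * (d - c))"
    by (simp add: lborel_prod)
  then show "measure lborel (window n c d) = (2 * real n + 1) * (d - c)"
    using assms by (simp add: measure_def)
  moreover have "window n c d \<subseteq> {0..} \<times> {0..1}"
    using window_subset_box[OF assms(1,3), of n] by (rule order_trans) auto
  moreover have "window n c d \<in> sets lborel" by (simp add: window_def slot_def lborel_prod[symmetric])
  ultimately show "window n c d \<in> ppp_domain" using \<mu> by (simp add: ppp_domain_def)
qed

lemma box_in_ppp_domain:
  assumes "0 \<le> T" shows "{0..T} \<times> {0..1} \<in> ppp_domain"
proof -
  have "emeasure (lborel \<Otimes>\<^sub>M lborel) ({0..T} \<times> {0..1::real}) = emeasure lborel {0..T} * emeasure lborel {0..1::real}"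
    by (rule lborel.emeasure_pair_measure_Times) auto
  then have "emeasure (lborel \<Otimes>\<^sub>M lborel) ({0..T} \<times> {0..1::real}) = ennreal T"
    using assms by simp
  moreover have "{0..T} \<times> {0..1} \<subseteq> {0..} \<times> {0..1::real}" by auto
  ultimately show ?thesis by (simp add: ppp_domain_def lborel_prod[symmetric])
qed

lemma iid_ppp_familyD:
  assumes "iid_ppp_family M V P" "v \<in> V" "A \<in> ppp_domain"
  shows "prob_space M" "AE \<omega> in M. finite (P v \<omega> \<inter> A)"
    "(\<lambda>\<omega>. card (P v \<omega> \<inter> A)) \<in> measurable M (count_space UNIV)"
    "\<And>k. measure M {\<omega> \<in> space M. card (P v \<omega> \<inter> A) = k}
                 = (measure lborel A) ^ k / fact k * exp (- measure lborel A)"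
  using assms unfolding iid_ppp_family_def by blast+

lemma AE_window_counts_concentrated:
  assumes ppp: "iid_ppp_family M V P" and v: "v \<in> V"
    and cd: "0 \<le> c" "c < d" "d \<le> 1" and \<epsilon>: "0 < \<epsilon>" "\<epsilon> < 1"
  shows "AE \<omega> in M. \<forall>\<^sub>F n in sequentially. window_count_close (P v \<omega>) n c d \<epsilon>"
  unfolding window_count_close_def
proof (rule AE_eventually_poisson_concentrated[OF _ _ _ _ _ \<epsilon>])
  have dom: "window n c d \<in> ppp_domain" for n using window_in_ppp_domain cd by auto
  show "prob_space M" by (rule iid_ppp_familyD(1)[OF ppp v dom])
  show "(\<lambda>\<omega>. card (P v \<omega> \<inter> window n c d)) \<in> measurable M (count_space UNIV)" for n
    by (rule iid_ppp_familyD(3)[OF ppp v dom])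
  show "measure M {\<omega> \<in> space M. card (P v \<omega> \<inter> window n c d) = k}
     = ((2 * real n + 1) * (d - c)) ^ k / fact k * exp (- ((2 * real n + 1) * (d - c)))" for n k
    using iid_ppp_familyD(4)[OF ppp v dom] window_in_ppp_domain(2)[of c d n] cd by simp
  show "(d - c) * real n \<le> (2 * real n + 1) * (d - c)" for n
    by (subst mult.commute, rule mult_right_mono) (use cd in auto)
qed (use cd in simp)

definition regular_atoms :: "'a set \<Rightarrow> ('a \<Rightarrow> (real \<times> real) set) \<Rightarrow> bool" where
  "regular_atoms V Q \<longleftrightarrow>
     (\<forall>v\<in>V. \<forall>T. finite (Q v \<inter> ({0..T} \<times> {0..1}))) \<and>
     (\<forall>v\<in>V. \<forall>(k::nat) (l::nat) (m::nat). k < l \<longrightarrow> l \<le> m \<longrightarrow> 2 \<le> m \<longrightarrow>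
        (\<forall>\<^sub>F n in sequentially. window_count_close (Q v) n (real k / m) (real l / m) (1 / m)))"

lemma AE_regular_atoms:
  assumes ppp: "iid_ppp_family M V P" and V: "countable V"
  shows "AE \<omega> in M. regular_atoms V (\<lambda>v. P v \<omega>)"
proof -
  have finite_nat: "AE \<omega> in M. \<forall>v\<in>V. \<forall>T::nat. finite (P v \<omega> \<inter> ({0..real T} \<times> {0..1}))"
    using iid_ppp_familyD(2)[OF ppp _ box_in_ppp_domain]
    by (subst AE_ball_countable[OF V], subst AE_all_countable) simp
  have "AE \<omega> in M. \<forall>v\<in>V. \<forall>(k::nat) (l::nat) (m::nat). k < l \<longrightarrow> l \<le> m \<longrightarrow> 2 \<le> m \<longrightarrow>
        (\<forall>\<^sub>F n in sequentially. window_count_close (P v \<omega>) n (real k / m) (real l / m) (1 / m))"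
  proof (subst AE_ball_countable[OF V], intro ballI, (subst AE_all_countable, intro allI)+)
    fix v and k l m :: nat assume v: "v \<in> V"
    show "AE \<omega> in M. k < l \<longrightarrow> l \<le> m \<longrightarrow> 2 \<le> m \<longrightarrow>
        (\<forall>\<^sub>F n in sequentially. window_count_close (P v \<omega>) n (real k / m) (real l / m) (1 / m))"
    proof (cases "k < l \<and> l \<le> m \<and> 2 \<le> m")
      case True
      then have "AE \<omega> in M. \<forall>\<^sub>F n in sequentially. window_count_close (P v \<omega>) n (real k / m) (real l / m) (1 / m)"
        by (intro AE_window_counts_concentrated[OF ppp v]) (auto simp: divide_strict_right_mono)
      then show ?thesis by (rule AE_mp) auto
    qed simp
  qed
  with finite_nat show ?thesis
  proof (eventually_elim, unfold regular_atoms_def, intro conjI ballI allI)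
    case (elim \<omega>)
    fix v T assume v: "v \<in> V"
    have "P v \<omega> \<inter> ({0..T} \<times> {0..1}) \<subseteq> P v \<omega> \<inter> ({0..real (nat \<lceil>T\<rceil>)} \<times> {0..1})"
      by (auto intro: order_trans[OF _ le_of_int_ceiling])
    then show "finite (P v \<omega> \<inter> ({0..T} \<times> {0..1}))" using elim v by (blast intro: finite_subset)
  qed auto
qed

section \<open>Sample paths of the urn\<close>

text \<open>One sample path: \<open>P v\<close> is the set of atoms of \<open>P\<^sub>v\<close> and \<open>Np t\<close> the weight vector \<open>N\<^sub>t\<^sub>-\<close>.\<close>

locale urn_path =
  fixes V :: "'a set" and E :: "'a set set" and \<alpha> :: real and enum :: "'a \<Rightarrow> nat \<Rightarrow> 'a set"
    and P :: "'a \<Rightarrow> (real \<times> real) set" and Np :: "real \<Rightarrow> 'a set \<Rightarrow> nat"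
  assumes edges: "\<And>f. f \<in> E \<Longrightarrow> f \<subseteq> V \<and> card f = 2"
    and finite_Ev: "\<And>v. v \<in> V \<Longrightarrow> finite (Ev E v)"
    and enum: "\<And>v. v \<in> V \<Longrightarrow> bij_betw (enum v) {..<card (Ev E v)} (Ev E v)"
    and alpha: "0 \<le> \<alpha>" "\<alpha> \<le> 1"
    and Np_eq: "\<And>t f. f \<in> E \<Longrightarrow> Np t f = 1 + (\<Sum>v\<in>f. card {(s, u) \<in> P v. 0 \<le> s \<and> s < t \<and>
                                        selects E \<alpha> enum v (Np s) u f})"
    and regular: "regular_atoms V P"
begin

definition hits :: "'a \<Rightarrow> 'a set \<Rightarrow> real set \<Rightarrow> (real \<times> real) set" where
  "hits v f T = {(s, u) \<in> P v. s \<in> T \<and> selects E \<alpha> enum v (Np s) u f}"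

definition N :: "real \<Rightarrow> 'a set \<Rightarrow> nat" where
  "N t f = 1 + (\<Sum>v\<in>f. card (hits v f {0..t}))"

abbreviation X :: "'a set \<Rightarrow> real \<Rightarrow> ereal" where
  "X f \<equiv> \<lambda>t. ereal (real (N t f) / t)"

lemma Liminf_le_Limsup_X: "Liminf at_top (X f) \<le> Limsup at_top (X f)"
  by (rule Liminf_le_Limsup) simp

lemma Np_eq_hits: "f \<in> E \<Longrightarrow> Np t f = 1 + (\<Sum>v\<in>f. card (hits v f {0..<t}))"
  using Np_eq[of f t] by (simp add: hits_def conj_assoc)

lemma edge_finite: "f \<in> E \<Longrightarrow> finite f"
  using edges[of f] by (auto intro: card_ge_0_finite)

lemma atoms_finite: "v \<in> V \<Longrightarrow> finite (P v \<inter> ({0..T} \<times> {0..1}))"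
  using regular by (simp add: regular_atoms_def)

lemma atoms_window_finite:
  assumes "v \<in> V" "0 \<le> c" "d \<le> 1"
  shows "finite (P v \<inter> window n c d)"
  by (rule finite_subset[OF _ atoms_finite[OF assms(1)]]) (use window_subset_box[OF assms(2,3)] in blast)

lemma hits_mark_bounds:
  assumes v: "v \<in> V" and su: "(s, u) \<in> hits v f T"
  shows "s \<in> T" "(s, u) \<in> P v" "0 < u" "u \<le> 1"
proof -
  have sel: "selects E \<alpha> enum v (Np s) u f" using su by (simp add: hits_def)
  show "0 < u" "u \<le> 1" by (rule selects_mark_bounds[OF finite_Ev[OF v] enum[OF v] sel])+
  show "s \<in> T" "(s, u) \<in> P v" using su by (simp_all add: hits_def)
qed

lemma hits_subset:
  assumes v: "v \<in> V" and T: "T \<subseteq> {0..b}"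
  shows "hits v f T \<subseteq> P v \<inter> ({0..b} \<times> {0..1})"
proof
  fix z assume z: "z \<in> hits v f T"
  obtain s u where su: "z = (s, u)" by (cases z)
  show "z \<in> P v \<inter> ({0..b} \<times> {0..1})"
    using hits_mark_bounds[OF v z[unfolded su]] T unfolding su by auto
qed

lemma finite_hits: "v \<in> V \<Longrightarrow> T \<subseteq> {0..b} \<Longrightarrow> finite (hits v f T)"
  by (rule finite_subset[OF hits_subset atoms_finite])

lemma card_hits_mono: "v \<in> V \<Longrightarrow> T \<subseteq> T' \<Longrightarrow> T' \<subseteq> {0..b} \<Longrightarrow> card (hits v f T) \<le> card (hits v f T')"
  by (rule card_mono[OF finite_hits]) (auto simp: hits_def)

lemma sum_card_hits_mono:
  assumes "f \<in> E" "T \<subseteq> T'" "T' \<subseteq> {0..b}"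
  shows "(\<Sum>v\<in>f. card (hits v f T)) \<le> (\<Sum>v\<in>f. card (hits v f T'))"
  using edges[OF assms(1)] assms(2,3) by (intro sum_mono card_hits_mono) auto

lemma Np_ge_1: "f \<in> E \<Longrightarrow> 1 \<le> Np t f"
  by (simp add: Np_eq_hits)

lemma Np_mono:
  assumes f: "f \<in> E" and "t \<le> t'"
  shows "Np t f \<le> Np t' f"
proof -
  have "(\<Sum>v\<in>f. card (hits v f {0..<t})) \<le> (\<Sum>v\<in>f. card (hits v f {0..<t'}))"
    using assms by (intro sum_card_hits_mono[where b = t']) auto
  then show ?thesis by (simp add: Np_eq_hits[OF f])
qed

lemma Np_le_N:
  assumes f: "f \<in> E"
  shows "Np t f \<le> N t f"
proof -
  have "(\<Sum>v\<in>f. card (hits v f {0..<t})) \<le> (\<Sum>v\<in>f. card (hits v f {0..t}))"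
    using assms by (intro sum_card_hits_mono[where b = t]) auto
  then show ?thesis by (simp add: Np_eq_hits[OF f] N_def)
qed

lemma N_le_Np:
  assumes f: "f \<in> E" and "t < t'"
  shows "N t f \<le> Np t' f"
proof -
  have "(\<Sum>v\<in>f. card (hits v f {0..t})) \<le> (\<Sum>v\<in>f. card (hits v f {0..<t'}))"
    using assms by (intro sum_card_hits_mono[where b = t']) auto
  then show ?thesis by (simp add: Np_eq_hits[OF f] N_def)
qed

lemma card_hits_below_square:
  assumes v: "v \<in> V"
  shows "card (hits v f {0..<real M ^ 2}) = (\<Sum>n<M. card (hits v f (slot n)))"
proof (induction M)
  case (Suc M)
  have le: "real M ^ 2 \<le> real (Suc M) ^ 2" "0 \<le> real M ^ 2" by (simp_all add: power_mono)
  have split: "{0..<real (Suc M) ^ 2} = {0..<real M ^ 2} \<union> slot M"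
    unfolding slot_def set_eq_iff atLeastLessThan_iff Un_iff using le by (intro allI iffI; linarith)
  have "hits v f {0..<real (Suc M) ^ 2} = hits v f {0..<real M ^ 2} \<union> hits v f (slot M)"
    unfolding split by (auto simp: hits_def)
  moreover have "hits v f {0..<real M ^ 2} \<inter> hits v f (slot M) = {}"
    by (auto simp: hits_def slot_def)
  moreover have "finite (hits v f T)" if "T \<subseteq> {0..<real (Suc M) ^ 2}" for T
    using that by (intro finite_hits[OF v, of _ "real (Suc M) ^ 2"]) auto
  ultimately have "card (hits v f {0..<real (Suc M) ^ 2}) = card (hits v f {0..<real M ^ 2}) + card (hits v f (slot M))"
    using split by (simp add: card_Un_disjoint)
  then show ?case using Suc by simp
qed (simp add: hits_def)

lemma Np_slot_increment:
  assumes f: "f \<in> E" and s: "s \<in> slot n"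
  shows "Np s f \<le> Np (real n ^ 2) f + (\<Sum>w\<in>f. card (P w \<inter> window n 0 1))"
proof -
  have "card (hits w f {0..<s}) \<le> card (hits w f {0..<real n ^ 2}) + card (P w \<inter> window n 0 1)"
    if w: "w \<in> f" for w
  proof -
    have wV: "w \<in> V" using edges[OF f] w by auto
    have "hits w f {0..<s} \<subseteq> hits w f {0..<real n ^ 2} \<union> (P w \<inter> window n 0 1)"
    proof
      fix z assume z: "z \<in> hits w f {0..<s}"
      obtain a b where ab: "z = (a, b)" by (cases z)
      have a: "0 \<le> a" "a < s" and b: "(a, b) \<in> P w" "0 < b" "b \<le> 1"
        using hits_mark_bounds[OF wV z[unfolded ab]] by auto
      show "z \<in> hits w f {0..<real n ^ 2} \<union> (P w \<inter> window n 0 1)"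
      proof (cases "a < real n ^ 2")
        case True
        then have "z \<in> hits w f {0..<real n ^ 2}" using z a unfolding ab hits_def by simp
        then show ?thesis by blast
      next
        case False
        then have "z \<in> P w \<inter> window n 0 1" using a b s unfolding ab by (simp add: mem_window slot_def)
        then show ?thesis by blast
      qed
    qed
    then have "card (hits w f {0..<s}) \<le> card (hits w f {0..<real n ^ 2} \<union> (P w \<inter> window n 0 1))"
      by (intro card_mono finite_UnI finite_hits[OF wV, of _ "real n ^ 2"] atoms_window_finite[OF wV]) auto
    then show ?thesis using card_Un_le order_trans by blast
  qed
  then show ?thesis
    unfolding Np_eq_hits[OF f] by (simp add: sum.distrib[symmetric] sum_mono)
qed

lemma sum_card_hits_below_square:
  assumes f: "f \<in> E"
  shows "(\<Sum>v\<in>f. card (hits v f {0..<real M ^ 2})) = (\<Sum>n<M. \<Sum>v\<in>f. card (hits v f (slot n)))"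
proof -
  have "(\<Sum>v\<in>f. card (hits v f {0..<real M ^ 2})) = (\<Sum>v\<in>f. \<Sum>n<M. card (hits v f (slot n)))"
    using edges[OF f] by (intro sum.cong refl card_hits_below_square) auto
  then show ?thesis by (simp only: sum.swap[of _ f])
qed

lemma N_le_sum_slots:
  assumes t: "0 \<le> t" and f: "f \<in> E"
  shows "N t f \<le> 1 + (\<Sum>n<nat \<lfloor>sqrt t\<rfloor> + 1. \<Sum>v\<in>f. card (hits v f (slot n)))"
proof -
  define M where "M = nat \<lfloor>sqrt t\<rfloor> + 1"
  have "sqrt t < real M" using t unfolding M_def by linarith
  then have "sqrt t ^ 2 < real M ^ 2" using t by (intro power_strict_mono) auto
  then have "(\<Sum>v\<in>f. card (hits v f {0..t})) \<le> (\<Sum>v\<in>f. card (hits v f {0..<real M ^ 2}))"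
    using f t by (intro sum_card_hits_mono[where b = "real M ^ 2"]) auto
  also have "\<dots> = (\<Sum>n<M. \<Sum>v\<in>f. card (hits v f (slot n)))" by (rule sum_card_hits_below_square[OF f])
  finally show ?thesis unfolding N_def M_def[symmetric] by simp
qed

lemma N_ge_sum_slots:
  assumes t: "0 \<le> t" and f: "f \<in> E"
  shows "1 + (\<Sum>n<nat \<lfloor>sqrt t\<rfloor>. \<Sum>v\<in>f. card (hits v f (slot n))) \<le> N t f"
proof -
  define M where "M = nat \<lfloor>sqrt t\<rfloor>"
  have "real M \<le> sqrt t" using t unfolding M_def by simp
  then have "real M ^ 2 \<le> sqrt t ^ 2" by (intro power_mono) auto
  then have "(\<Sum>v\<in>f. card (hits v f {0..<real M ^ 2})) \<le> (\<Sum>v\<in>f. card (hits v f {0..t}))"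
    using f t by (intro sum_card_hits_mono[where b = t]) auto
  then show ?thesis unfolding N_def M_def[symmetric] sum_card_hits_below_square[OF f] by simp
qed

lemma eventually_grid_counts:
  fixes m :: nat
  assumes v: "v \<in> V" and m: "2 \<le> m"
  shows "\<forall>\<^sub>F n in sequentially. \<forall>k l. k < l \<longrightarrow> l \<le> m \<longrightarrow>
    window_count_close (P v) n (real k / m) (real l / m) (1 / m)"
proof -
  have "finite {(k, l). k < l \<and> l \<le> m}" by (rule finite_subset[of _ "{..m} \<times> {..m}"]) auto
  then have "\<forall>\<^sub>F n in sequentially. \<forall>(k, l) \<in> {(k, l). k < l \<and> l \<le> m}.
    window_count_close (P v) n (real k / m) (real l / m) (1 / m)"
    using regular v m by (intro eventually_ball_finite) (auto simp: regular_atoms_def)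
  then show ?thesis by (rule eventually_mono) auto
qed

lemma eventually_window_card_le:
  fixes m :: nat
  assumes v: "v \<in> V" and m: "2 \<le> m"
  shows "\<forall>\<^sub>F n in sequentially. \<forall>x y. 0 \<le> x \<longrightarrow> x \<le> y \<longrightarrow> y \<le> 1 \<longrightarrow>
    real (card (P v \<inter> window n x y)) \<le> (1 + 1 / m) * (2 * real n + 1) * (y - x + 2 / m)"
  using eventually_grid_counts[OF v m]
  by eventually_elim (use m in \<open>auto intro!: card_window_le_of_grid[OF atoms_window_finite[OF v]]\<close>)

lemma eventually_window_card_ge:
  fixes m :: nat
  assumes v: "v \<in> V" and m: "2 \<le> m"
  shows "\<forall>\<^sub>F n in sequentially. \<forall>x y. 0 \<le> x \<longrightarrow> y \<le> 1 \<longrightarrow>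
    (1 - 1 / m) * (2 * real n + 1) * (y - x - 2 / m) \<le> real (card (P v \<inter> window n x y))"
  using eventually_grid_counts[OF v m]
  by eventually_elim (use m in \<open>auto intro!: card_window_ge_of_grid[OF atoms_window_finite[OF v]]\<close>)

lemma eventually_Np_ge:
  assumes f: "f \<in> E" and b: "ereal b < Liminf at_top (X f)"
  shows "\<forall>\<^sub>F s in at_top. b * s \<le> real (Np s f)"
proof -
  obtain c where c: "b < c" "ereal c < Liminf at_top (X f)" using ereal_dense2[OF b] by auto
  obtain T where T: "\<And>t. T \<le> t \<Longrightarrow> c < real (N t f) / t"
    using less_LiminfD[OF c(2)] unfolding eventually_at_top_linorder by auto
  show ?thesis unfolding eventually_at_top_linorder
  proof (intro exI[of _ "max (max (T + 1) 2) (c / (c - b))"] allI impI)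
    fix s assume s: "max (max (T + 1) 2) (c / (c - b)) \<le> s"
    then have "c * (s - 1) < real (N (s - 1) f)" using T[of "s - 1"] by (simp add: field_simps)
    also have "\<dots> \<le> real (Np s f)" using N_le_Np[OF f, of "s - 1" s] by simp
    finally have "c * (s - 1) < real (Np s f)" .
    moreover have "c \<le> (c - b) * s" using s c(1) by (simp add: pos_divide_le_eq mult.commute)
    ultimately show "b * s \<le> real (Np s f)" by (simp add: algebra_simps)
  qed
qed

lemma eventually_Np_le:
  assumes f: "f \<in> E" and B: "Limsup at_top (X f) < ereal B"
  shows "\<forall>\<^sub>F s in at_top. real (Np s f) \<le> B * s"
  using Limsup_lessD[OF B] eventually_gt_at_top[of "0::real"]
proof eventually_elim
  case (elim s)
  then have "real (N s f) < B * s" by (simp add: field_simps)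
  then show ?case using Np_le_N[OF f, of s] by linarith
qed

lemma eventually_slot_card_le:
  assumes "v \<in> V"
  shows "\<forall>\<^sub>F n in sequentially. real (card (P v \<inter> window n 0 1)) \<le> 3 * (2 * real n + 1)"
  using eventually_window_card_le[OF assms order.refl]
proof eventually_elim
  case (elim n)
  from elim[rule_format, of 0 1] show ?case by (simp add: algebra_simps)
qed

definition linear_growth :: "'a set \<Rightarrow> bool" where
  "linear_growth f \<longleftrightarrow> (\<exists>b>0. \<forall>\<^sub>F s in at_top. b * s \<le> real (Np s f))"

lemma eventually_slot_growth_small:
  assumes f: "f \<in> E" and growth: "linear_growth f" and \<eta>: "0 < \<eta>"
  shows "\<forall>\<^sub>F n in sequentially. \<forall>s\<in>slot n.
    1 \<le> Np (real n ^ 2) f \<and> Np (real n ^ 2) f \<le> Np s f \<and> real (Np s f) \<le> (1 + \<eta>) * real (Np (real n ^ 2) f)"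
proof -
  obtain b where b: "0 < b" "\<forall>\<^sub>F s in at_top. b * s \<le> real (Np s f)"
    using growth by (auto simp: linear_growth_def)
  have "\<forall>\<^sub>F n in sequentially. b * real n ^ 2 \<le> real (Np (real n ^ 2) f)"
    using eventually_ge_square[OF b(2)] by eventually_elim auto
  moreover have "\<forall>\<^sub>F n in sequentially. \<forall>w\<in>f. real (card (P w \<inter> window n 0 1)) \<le> 3 * (2 * real n + 1)"
    using edges[OF f] by (intro eventually_ball_finite edge_finite[OF f] ballI eventually_slot_card_le) auto
  moreover have "\<forall>\<^sub>F n in sequentially. 6 * (2 * real n + 1) \<le> \<eta> * b * real n ^ 2"
    using \<eta> b(1) by real_asymp
  ultimately show ?thesis
  proof eventually_elim
    case (elim n)
    show ?case
    proof (intro ballI conjI)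
      fix s assume s: "s \<in> slot n"
      show "1 \<le> Np (real n ^ 2) f" by (rule Np_ge_1[OF f])
      show "Np (real n ^ 2) f \<le> Np s f" using s by (intro Np_mono f) (simp add: slot_def)
      \<comment> \<open>Within a slot an edge gains at most the \<open>O(n)\<close> atoms of its endpoints, while its weight
        is already of order \<open>n\<^sup>2\<close>.\<close>
      have "real (Np s f) \<le> real (Np (real n ^ 2) f) + (\<Sum>w\<in>f. real (card (P w \<inter> window n 0 1)))"
        using Np_slot_increment[OF f s] by (simp flip: of_nat_sum)
      also have "(\<Sum>w\<in>f. real (card (P w \<inter> window n 0 1))) \<le> (\<Sum>w\<in>f. 3 * (2 * real n + 1))"
        using elim(2) by (intro sum_mono) auto
      also have "\<dots> = 6 * (2 * real n + 1)" using edges[OF f] by simp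
      also have "\<dots> \<le> \<eta> * real (Np (real n ^ 2) f)"
        using elim(1,3) \<eta> by (smt (verit) mult.assoc mult_left_mono)
      finally show "real (Np s f) \<le> (1 + \<eta>) * real (Np (real n ^ 2) f)" by (simp add: algebra_simps)
    qed
  qed
qed

end

section \<open>Reinforcement of a fixed edge\<close>

locale urn_path_edge = urn_path +
  fixes e :: "'a set"
  assumes e: "e \<in> E"
begin

definition idx :: "'a \<Rightarrow> nat" where
  "idx v = (THE i. i < card (Ev E v) \<and> enum v i = e)"

definition offset :: "'a \<Rightarrow> real \<Rightarrow> real" where
  "offset v s = (\<Sum>j<idx v. pol E \<alpha> v (Np s) (enum v j))"

abbreviation pol_e :: "'a \<Rightarrow> real \<Rightarrow> real" where
  "pol_e v s \<equiv> pol E \<alpha> v (Np s) e"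

lemma endpoint_in_V: "v \<in> e \<Longrightarrow> v \<in> V"
  using edges[OF e] by auto

lemma e_in_Ev: "v \<in> e \<Longrightarrow> e \<in> Ev E v"
  using e by (simp add: Ev_def)

lemma idx:
  assumes v: "v \<in> e"
  shows "idx v < card (Ev E v)" "enum v (idx v) = e"
proof -
  have bij: "bij_betw (enum v) {..<card (Ev E v)} (Ev E v)" using enum[OF endpoint_in_V[OF v]] .
  then have "e \<in> enum v ` {..<card (Ev E v)}" using e_in_Ev[OF v] by (simp add: bij_betw_def)
  then obtain i where i: "i < card (Ev E v)" "enum v i = e" by auto
  have "\<exists>!i. i < card (Ev E v) \<and> enum v i = e"
    using i bij_betw_imp_inj_on[OF bij] by (auto simp: inj_on_def)
  then have "idx v < card (Ev E v) \<and> enum v (idx v) = e" unfolding idx_def by (rule theI')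
  then show "idx v < card (Ev E v)" "enum v (idx v) = e" by auto
qed

lemma enum_below_idx:
  assumes "v \<in> e" "j < idx v"
  shows "enum v j \<in> Ev E v"
  using bij_betwE[OF enum[OF endpoint_in_V[OF assms(1)]]] idx(1)[OF assms(1)] assms(2) by simp

lemma selects_e_iff:
  assumes v: "v \<in> e"
  shows "selects E \<alpha> enum v (Np s) u e \<longleftrightarrow> offset v s < u \<and> u \<le> offset v s + pol_e v s"
  unfolding offset_def by (rule selects_iff_interval[where enum = enum, OF enum[OF endpoint_in_V[OF v]] idx[OF v]])

lemma offset_nonneg: "0 \<le> offset v s"
  unfolding offset_def by (intro sum_nonneg pol_nonneg)

lemma offset_add_pol_e_le_1:
  assumes v: "v \<in> e"
  shows "offset v s + pol_e v s \<le> 1"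
proof -
  have vV: "v \<in> V" by (rule endpoint_in_V[OF v])
  have "offset v s + pol_e v s = (\<Sum>j<Suc (idx v). pol E \<alpha> v (Np s) (enum v j))"
    using idx[OF v] by (simp add: offset_def)
  also have "\<dots> \<le> 1"
    using idx(1)[OF v] by (intro sum_pol_enum_le_1[where enum = enum, OF finite_Ev[OF vV] enum[OF vV]]) simp
  finally show ?thesis .
qed

lemma eventually_offset_drift:
  assumes v: "v \<in> e" and \<eta>: "0 < \<eta>" and growth: "\<And>f. f \<in> Ev E v \<Longrightarrow> linear_growth f"
  shows "\<forall>\<^sub>F n in sequentially. \<forall>s\<in>slot n. \<bar>offset v s - offset v (real n ^ 2)\<bar> \<le> \<eta>"
proof -
  have vV: "v \<in> V" by (rule endpoint_in_V[OF v])
  have "\<forall>\<^sub>F n in sequentially. \<forall>f\<in>Ev E v. \<forall>s\<in>slot n.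
    1 \<le> Np (real n ^ 2) f \<and> Np (real n ^ 2) f \<le> Np s f \<and> real (Np s f) \<le> (1 + \<eta>) * real (Np (real n ^ 2) f)"
    using finite_Ev[OF vV] growth \<eta>
    by (intro eventually_ball_finite ballI eventually_slot_growth_small) (auto simp: Ev_def)
  then show ?thesis
  proof eventually_elim
    case (elim n)
    show ?case
    proof
      fix s assume s: "s \<in> slot n"
      have bound: "\<And>g. g \<in> Ev E v \<Longrightarrow>
        1 \<le> Np (real n ^ 2) g \<and> Np (real n ^ 2) g \<le> Np s g \<and> real (Np s g) \<le> (1 + \<eta>) * real (Np (real n ^ 2) g)"
        using elim s by blast
      have "pol E \<alpha> v (Np s) (enum v j) \<le> (1 + \<eta>) * pol E \<alpha> v (Np (real n ^ 2)) (enum v j)"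
        "pol E \<alpha> v (Np (real n ^ 2)) (enum v j) \<le> (1 + \<eta>) * pol E \<alpha> v (Np s) (enum v j)"
        if "j < idx v" for j
        using pol_ratio_bound[OF finite_Ev[OF vV] enum_below_idx[OF v that] bound less_imp_le[OF \<eta>] alpha]
        by auto
      then have ratio: "offset v s \<le> (1 + \<eta>) * offset v (real n ^ 2)" "offset v (real n ^ 2) \<le> (1 + \<eta>) * offset v s"
        unfolding offset_def sum_distrib_left by (auto intro: sum_mono)
      have small: "\<eta> * offset v s' \<le> \<eta>" for s'
        using offset_add_pol_e_le_1[OF v, of s'] pol_nonneg[of E \<alpha> v "Np s'" e] \<eta>
        by (intro mult_left_le) auto
      from ratio small[of s] small[of "real n ^ 2"] show "\<bar>offset v s - offset v (real n ^ 2)\<bar> \<le> \<eta>"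
        by (simp add: abs_le_iff algebra_simps)
    qed
  qed
qed

lemma card_hits_slot_le:
  fixes m :: nat
  assumes v: "v \<in> e" and m: "0 < m"
    and counts: "\<And>x y. 0 \<le> x \<Longrightarrow> x \<le> y \<Longrightarrow> y \<le> 1 \<Longrightarrow>
      real (card (P v \<inter> window n x y)) \<le> (1 + 1 / m) * (2 * real n + 1) * (y - x + 2 / m)"
    and drift: "\<And>s. s \<in> slot n \<Longrightarrow> \<bar>offset v s - offset v (real n ^ 2)\<bar> \<le> 1 / m"
    and q: "\<And>s. s \<in> slot n \<Longrightarrow> pol_e v s \<le> q"
  shows "real (card (hits v e (slot n))) \<le> (1 + 1 / m) * (2 * real n + 1) * (q + 4 / m)"
proof -
  have vV: "v \<in> V" by (rule endpoint_in_V[OF v])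
  define A where "A = offset v (real n ^ 2)"
  have q0: "0 \<le> q" using q[OF square_in_slot] pol_nonneg[of E \<alpha> v "Np (real n ^ 2)" e] by linarith
  have A: "0 \<le> A" "A \<le> 1"
    using offset_nonneg[of v "real n ^ 2"] offset_add_pol_e_le_1[OF v, of "real n ^ 2"]
      pol_nonneg[of E \<alpha> v "Np (real n ^ 2)" e]
    unfolding A_def by linarith+
  define x where "x = max 0 (A - 1 / m)"
  define y where "y = min 1 (A + 1 / m + q)"
  have \<eta>: "0 \<le> 1 / real m" by simp
  have bounds: "0 \<le> x" "A - 1 / m \<le> x" "y \<le> 1" "y \<le> A + 1 / m + q"
    unfolding x_def y_def by simp_all
  have "x \<le> y"
    unfolding x_def y_def max.bounded_iff min.bounded_iff using A q0 \<eta> by (intro conjI; linarith)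
  then have xy: "0 \<le> x" "x \<le> y" "y \<le> 1" "y - x \<le> q + 2 / m"
    using bounds by simp_all
  have "hits v e (slot n) \<subseteq> P v \<inter> window n x y"
  proof
    fix z assume z: "z \<in> hits v e (slot n)"
    obtain s u where su: "z = (s, u)" by (cases z)
    have s: "s \<in> slot n" "(s, u) \<in> P v" "0 < u" "u \<le> 1"
      using hits_mark_bounds[OF vV z[unfolded su]] by auto
    have "selects E \<alpha> enum v (Np s) u e" using z by (simp add: su hits_def)
    then have "offset v s < u" "u \<le> offset v s + pol_e v s" unfolding selects_e_iff[OF v] by auto
    moreover have "A - 1 / m \<le> offset v s" "offset v s \<le> A + 1 / m"
      using drift[OF s(1)] unfolding A_def abs_le_iff by linarith+
    ultimately have "x < u" "u \<le> y" using q[OF s(1)] s(3,4) unfolding x_def y_def by auto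
    then show "z \<in> P v \<inter> window n x y" using s su by (simp add: mem_window)
  qed
  then have "real (card (hits v e (slot n))) \<le> real (card (P v \<inter> window n x y))"
    by (intro of_nat_mono card_mono atoms_window_finite[OF vV xy(1,3)])
  also have "\<dots> \<le> (1 + 1 / m) * (2 * real n + 1) * (y - x + 2 / m)"
    by (rule counts[OF xy(1-3)])
  also have "\<dots> \<le> (1 + 1 / m) * (2 * real n + 1) * (q + 4 / m)"
    using xy(4) by (intro mult_left_mono) auto
  finally show ?thesis .
qed

lemma card_hits_slot_ge:
  fixes m :: nat
  assumes v: "v \<in> e" and m: "0 < m"
    and counts: "\<And>x y. 0 \<le> x \<Longrightarrow> y \<le> 1 \<Longrightarrow>
      (1 - 1 / m) * (2 * real n + 1) * (y - x - 2 / m) \<le> real (card (P v \<inter> window n x y))"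
    and drift: "\<And>s. s \<in> slot n \<Longrightarrow> \<bar>offset v s - offset v (real n ^ 2)\<bar> \<le> 1 / m"
    and q: "\<And>s. s \<in> slot n \<Longrightarrow> q \<le> pol_e v s"
  shows "(1 - 1 / m) * (2 * real n + 1) * (q - 4 / m) \<le> real (card (hits v e (slot n)))"
proof -
  have vV: "v \<in> V" by (rule endpoint_in_V[OF v])
  define A where "A = offset v (real n ^ 2)"
  define x where "x = A + 1 / m"
  define y where "y = A - 1 / m + q"
  have \<eta>: "0 \<le> 1 / real m" by simp
  have xy: "0 \<le> x" "y \<le> 1"
    using offset_nonneg[of v "real n ^ 2"] offset_add_pol_e_le_1[OF v, of "real n ^ 2"] q[OF square_in_slot] \<eta>
    unfolding x_def y_def A_def by linarith+
  have "P v \<inter> window n x y \<subseteq> hits v e (slot n)"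
  proof
    fix z assume z: "z \<in> P v \<inter> window n x y"
    obtain s u where su: "z = (s, u)" by (cases z)
    have s: "s \<in> slot n" "x < u" "u \<le> y" "(s, u) \<in> P v" using z by (auto simp: su mem_window)
    moreover have "A - 1 / m \<le> offset v s" "offset v s \<le> A + 1 / m"
      using drift[OF s(1)] unfolding A_def abs_le_iff by linarith+
    ultimately have "offset v s < u" "u \<le> offset v s + pol_e v s"
      using q[OF s(1)] unfolding x_def y_def by auto
    then have "selects E \<alpha> enum v (Np s) u e" unfolding selects_e_iff[OF v] by auto
    then show "z \<in> hits v e (slot n)" using s by (simp add: su hits_def)
  qed
  then have "real (card (P v \<inter> window n x y)) \<le> real (card (hits v e (slot n)))"
    by (intro of_nat_mono card_mono finite_hits[OF vV slot_subset])
  moreover have "(1 - 1 / m) * (2 * real n + 1) * (q - 4 / m) = (1 - 1 / m) * (2 * real n + 1) * (y - x - 2 / m)"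
    by (simp add: x_def y_def algebra_simps)
  ultimately show ?thesis using counts[OF xy] by linarith
qed

lemma eventually_card_hits_slot_le:
  fixes m :: nat
  assumes v: "v \<in> e" and m: "2 \<le> m" and growth: "\<And>f. f \<in> Ev E v \<Longrightarrow> linear_growth f"
    and q: "\<forall>\<^sub>F s in at_top. pol_e v s \<le> q"
  shows "\<forall>\<^sub>F n in sequentially. real (card (hits v e (slot n))) \<le> (1 + 1 / m) * (2 * real n + 1) * (q + 4 / m)"
proof -
  have "\<forall>\<^sub>F n in sequentially. \<forall>s\<in>slot n. \<bar>offset v s - offset v (real n ^ 2)\<bar> \<le> 1 / m"
    by (intro eventually_offset_drift v growth) (use m in simp)
  with eventually_window_card_le[OF endpoint_in_V[OF v] m] eventually_ge_square[OF q]
  show ?thesis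
    by eventually_elim (rule card_hits_slot_le[OF v]; use m in \<open>auto simp: slot_def\<close>)
qed

lemma eventually_card_hits_slot_ge:
  fixes m :: nat
  assumes v: "v \<in> e" and m: "2 \<le> m" and growth: "\<And>f. f \<in> Ev E v \<Longrightarrow> linear_growth f"
    and q: "\<forall>\<^sub>F s in at_top. q \<le> pol_e v s"
  shows "\<forall>\<^sub>F n in sequentially. (1 - 1 / m) * (2 * real n + 1) * (q - 4 / m) \<le> real (card (hits v e (slot n)))"
proof -
  have "\<forall>\<^sub>F n in sequentially. \<forall>s\<in>slot n. \<bar>offset v s - offset v (real n ^ 2)\<bar> \<le> 1 / m"
    by (intro eventually_offset_drift v growth) (use m in simp)
  with eventually_window_card_ge[OF endpoint_in_V[OF v] m] eventually_ge_square[OF q]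
  show ?thesis
    by eventually_elim (rule card_hits_slot_ge[OF v]; use m in \<open>auto simp: slot_def\<close>)
qed

lemma finite_e: "finite e"
  by (rule edge_finite[OF e])

lemma Limsup_X_le:
  fixes m :: nat and q :: "'a \<Rightarrow> real"
  assumes m: "2 \<le> m" and growth: "\<And>v f. v \<in> e \<Longrightarrow> f \<in> Ev E v \<Longrightarrow> linear_growth f"
    and q: "\<And>v. v \<in> e \<Longrightarrow> \<forall>\<^sub>F s in at_top. pol_e v s \<le> q v"
  shows "Limsup at_top (X e) \<le> ereal (\<Sum>v\<in>e. (1 + 1 / m) * (q v + 4 / m))"
proof (rule Limsup_div_le_of_slot_bound[where w = "\<lambda>n. \<Sum>v\<in>e. real (card (hits v e (slot n)))"])
  have "\<forall>\<^sub>F n in sequentially. \<forall>v\<in>e. real (card (hits v e (slot n))) \<le> (1 + 1 / m) * (2 * real n + 1) * (q v + 4 / m)"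
    using finite_e m growth q by (intro eventually_ball_finite ballI eventually_card_hits_slot_le) auto
  then show "\<forall>\<^sub>F n in sequentially.
    (\<Sum>v\<in>e. real (card (hits v e (slot n)))) \<le> (\<Sum>v\<in>e. (1 + 1 / m) * (q v + 4 / m)) * (2 * real n + 1)"
  proof eventually_elim
    case (elim n)
    then have "(\<Sum>v\<in>e. real (card (hits v e (slot n)))) \<le> (\<Sum>v\<in>e. (1 + 1 / m) * (2 * real n + 1) * (q v + 4 / m))"
      by (intro sum_mono) auto
    also have "\<dots> = (\<Sum>v\<in>e. (1 + 1 / m) * (q v + 4 / m)) * (2 * real n + 1)"
      unfolding sum_distrib_right by (rule sum.cong) (simp_all add: mult_ac)
    finally show ?case .
  qed
  have "0 \<le> q v" if v: "v \<in> e" for v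
  proof -
    obtain s where "pol_e v s \<le> q v" using eventually_happens'[OF _ q[OF v]] by auto
    then show ?thesis using pol_nonneg[of E \<alpha> v "Np s" e] by linarith
  qed
  then show "0 \<le> (\<Sum>v\<in>e. (1 + 1 / m) * (q v + 4 / m))" by (intro sum_nonneg) simp
  show "real (N t e) \<le> 1 + (\<Sum>n<nat \<lfloor>sqrt t\<rfloor> + 1. \<Sum>v\<in>e. real (card (hits v e (slot n))))" if "0 \<le> t" for t
    using of_nat_mono[OF N_le_sum_slots[OF that e]] by simp
qed

lemma Liminf_X_ge:
  fixes m :: nat and q :: "'a \<Rightarrow> real"
  assumes m: "2 \<le> m" and growth: "\<And>v f. v \<in> e \<Longrightarrow> f \<in> Ev E v \<Longrightarrow> linear_growth f"
    and q: "\<And>v. v \<in> e \<Longrightarrow> \<forall>\<^sub>F s in at_top. q v \<le> pol_e v s"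
  shows "ereal (\<Sum>v\<in>e. (1 - 1 / m) * (q v - 4 / m)) \<le> Liminf at_top (X e)"
proof (rule Liminf_div_ge_of_slot_bound[where w = "\<lambda>n. \<Sum>v\<in>e. real (card (hits v e (slot n)))"])
  have "\<forall>\<^sub>F n in sequentially. \<forall>v\<in>e. (1 - 1 / m) * (2 * real n + 1) * (q v - 4 / m) \<le> real (card (hits v e (slot n)))"
    using finite_e m growth q by (intro eventually_ball_finite ballI eventually_card_hits_slot_ge) auto
  then show "\<forall>\<^sub>F n in sequentially.
    (\<Sum>v\<in>e. (1 - 1 / m) * (q v - 4 / m)) * (2 * real n + 1) \<le> (\<Sum>v\<in>e. real (card (hits v e (slot n))))"
  proof eventually_elim
    case (elim n)
    have "(\<Sum>v\<in>e. (1 - 1 / m) * (q v - 4 / m)) * (2 * real n + 1)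
      = (\<Sum>v\<in>e. (1 - 1 / m) * (2 * real n + 1) * (q v - 4 / m))"
      unfolding sum_distrib_right by (rule sum.cong) (simp_all add: mult_ac)
    also have "\<dots> \<le> (\<Sum>v\<in>e. real (card (hits v e (slot n))))"
      using elim by (intro sum_mono) auto
    finally show ?case .
  qed
  show "0 \<le> (\<Sum>v\<in>e. real (card (hits v e (slot n))))" for n by (intro sum_nonneg) simp
  show "1 + (\<Sum>n<nat \<lfloor>sqrt t\<rfloor>. \<Sum>v\<in>e. real (card (hits v e (slot n)))) \<le> real (N t e)" if "0 \<le> t" for t
    using of_nat_mono[OF N_ge_sum_slots[OF that e]] by simp
qed

lemma pol_e_eq:
  assumes v: "v \<in> e"
  shows "pol_e v s = real (Np s e) powr \<alpha> / (real (Np s e) powr \<alpha> + (\<Sum>f\<in>Ev E v - {e}. real (Np s f) powr \<alpha>))"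
proof -
  have pw: "pw (real (Np s f)) \<alpha> = real (Np s f) powr \<alpha>" if "f \<in> Ev E v" for f
    using that Np_ge_1[of f s] by (intro pw_pos_eq_powr) (auto simp: Ev_def)
  have "(\<Sum>f\<in>Ev E v. pw (real (Np s f)) \<alpha>) = (\<Sum>f\<in>Ev E v. real (Np s f) powr \<alpha>)"
    by (rule sum.cong[OF refl pw])
  also have "\<dots> = real (Np s e) powr \<alpha> + (\<Sum>f\<in>Ev E v - {e}. real (Np s f) powr \<alpha>)"
    by (rule sum.remove[OF finite_Ev[OF endpoint_in_V[OF v]] e_in_Ev[OF v]])
  finally show ?thesis by (simp add: pol_def pw e_in_Ev[OF v])
qed

lemma eventually_pol_e_le:
  assumes v: "v \<in> e" and K: "0 < K" and own: "\<forall>\<^sub>F s in at_top. real (Np s e) \<le> K * s"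
    and b: "\<And>f. f \<in> Ev E v - {e} \<Longrightarrow> 0 < b f"
    and rivals: "\<And>f. f \<in> Ev E v - {e} \<Longrightarrow> \<forall>\<^sub>F s in at_top. b f * s \<le> real (Np s f)"
  shows "\<forall>\<^sub>F s in at_top. pol_e v s \<le> K powr \<alpha> / (K powr \<alpha> + (\<Sum>f\<in>Ev E v - {e}. b f powr \<alpha>))"
proof -
  have "\<forall>\<^sub>F s in at_top. \<forall>f\<in>Ev E v - {e}. b f * s \<le> real (Np s f)"
    using finite_Ev[OF endpoint_in_V[OF v]] rivals by (intro eventually_ball_finite) auto
  with own eventually_gt_at_top[of 0] show ?thesis
  proof eventually_elim
    case (elim s)
    let ?B = "\<Sum>f\<in>Ev E v - {e}. b f powr \<alpha>"
    have "real (Np s e) powr \<alpha> \<le> (K * s) powr \<alpha>"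
      using elim(1) alpha(1) by (intro powr_mono2) auto
    also have "\<dots> = K powr \<alpha> * s powr \<alpha>" using K elim(2) by (simp add: powr_mult)
    finally have own_s: "real (Np s e) powr \<alpha> \<le> K powr \<alpha> * s powr \<alpha>" .
    have "?B * s powr \<alpha> = (\<Sum>f\<in>Ev E v - {e}. (b f * s) powr \<alpha>)"
      unfolding sum_distrib_right using b elim(2)
      by (intro sum.cong refl powr_mult[symmetric])
    also have "\<dots> \<le> (\<Sum>f\<in>Ev E v - {e}. real (Np s f) powr \<alpha>)"
    proof (intro sum_mono powr_mono2)
      fix f assume f: "f \<in> Ev E v - {e}"
      show "0 \<le> b f * s" using b[OF f] elim(2) by simp
      show "b f * s \<le> real (Np s f)" using elim(3) f by blast
    qed (use alpha in auto)
    finally have rivals_s: "?B * s powr \<alpha> \<le> (\<Sum>f\<in>Ev E v - {e}. real (Np s f) powr \<alpha>)" .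
    have "0 \<le> ?B * s powr \<alpha>" by (intro mult_nonneg_nonneg sum_nonneg) auto
    then have "pol_e v s \<le> K powr \<alpha> * s powr \<alpha> / (K powr \<alpha> * s powr \<alpha> + ?B * s powr \<alpha>)"
      unfolding pol_e_eq[OF v] using own_s rivals_s K elim(2) by (intro ratio_to_sum_mono) auto
    also have "\<dots> = K powr \<alpha> / (K powr \<alpha> + ?B)"
      using elim(2) by (simp add: distrib_right[symmetric])
    finally show ?case .
  qed
qed

lemma eventually_pol_e_ge:
  assumes v: "v \<in> e" and K: "0 < K" and own: "\<forall>\<^sub>F s in at_top. K * s \<le> real (Np s e)"
    and B: "\<And>f. f \<in> Ev E v - {e} \<Longrightarrow> 0 < B f"
    and rivals: "\<And>f. f \<in> Ev E v - {e} \<Longrightarrow> \<forall>\<^sub>F s in at_top. real (Np s f) \<le> B f * s"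
  shows "\<forall>\<^sub>F s in at_top. K powr \<alpha> / (K powr \<alpha> + (\<Sum>f\<in>Ev E v - {e}. B f powr \<alpha>)) \<le> pol_e v s"
proof -
  have "\<forall>\<^sub>F s in at_top. \<forall>f\<in>Ev E v - {e}. real (Np s f) \<le> B f * s"
    using finite_Ev[OF endpoint_in_V[OF v]] rivals by (intro eventually_ball_finite) auto
  with own eventually_gt_at_top[of 0] show ?thesis
  proof eventually_elim
    case (elim s)
    let ?B = "\<Sum>f\<in>Ev E v - {e}. B f powr \<alpha>"
    have "K powr \<alpha> * s powr \<alpha> = (K * s) powr \<alpha>" using K elim(2) by (simp add: powr_mult)
    also have "\<dots> \<le> real (Np s e) powr \<alpha>"
      using elim(1) K elim(2) alpha(1) by (intro powr_mono2) auto
    finally have own_s: "K powr \<alpha> * s powr \<alpha> \<le> real (Np s e) powr \<alpha>" .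
    have "(\<Sum>f\<in>Ev E v - {e}. real (Np s f) powr \<alpha>) \<le> (\<Sum>f\<in>Ev E v - {e}. (B f * s) powr \<alpha>)"
      using elim(3) alpha(1) by (intro sum_mono powr_mono2) auto
    also have "\<dots> = ?B * s powr \<alpha>"
      unfolding sum_distrib_right using B elim(2)
      by (intro sum.cong refl powr_mult)
    finally have rivals_s: "(\<Sum>f\<in>Ev E v - {e}. real (Np s f) powr \<alpha>) \<le> ?B * s powr \<alpha>" .
    have "K powr \<alpha> / (K powr \<alpha> + ?B) = K powr \<alpha> * s powr \<alpha> / (K powr \<alpha> * s powr \<alpha> + ?B * s powr \<alpha>)"
      using elim(2) by (simp add: distrib_right[symmetric])
    also have "\<dots> \<le> pol_e v s"
      unfolding pol_e_eq[OF v] using own_s rivals_s K elim(2) Np_ge_1[OF e, of s]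
      by (intro ratio_to_sum_mono) (auto intro: sum_nonneg)
    finally show ?case .
  qed
qed

end

section \<open>The fixed-point inequality\<close>

lemma scaled_share_bounds:
  fixes \<tau> a S :: real
  assumes \<tau>: "0 < \<tau>" and a: "0 < a" and S: "0 \<le> S"
  shows "\<tau> * a / (\<tau> * a + S) \<le> max 1 \<tau> * (a / (a + S))"
    and "min 1 \<tau> * (a / (a + S)) \<le> \<tau> * a / (\<tau> * a + S)"
proof -
  have pos: "0 < a + S" "0 < \<tau> * a + S" using \<tau> a S by (auto intro: add_pos_nonneg)
  show "\<tau> * a / (\<tau> * a + S) \<le> max 1 \<tau> * (a / (a + S))"
  proof (cases "\<tau> \<le> 1")
    case True
    then have "\<tau> * a / (\<tau> * a + S) \<le> a / (a + S)"
      using \<tau> a S by (intro ratio_to_sum_mono) (auto simp: mult_left_le_one_le)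
    then show ?thesis using True by simp
  next
    case False
    then have "\<tau> * a / (\<tau> * a + S) \<le> \<tau> * a / (a + S)"
      using \<tau> a S pos by (intro divide_left_mono) (auto simp: mult_le_cancel_right1)
    then show ?thesis using False by simp
  qed
  show "min 1 \<tau> * (a / (a + S)) \<le> \<tau> * a / (\<tau> * a + S)"
  proof (cases "1 \<le> \<tau>")
    case True
    then have "a / (a + S) \<le> \<tau> * a / (\<tau> * a + S)"
      using \<tau> a S by (intro ratio_to_sum_mono) auto
    then show ?thesis using True by simp
  next
    case False
    then have "\<tau> * a / (a + S) \<le> \<tau> * a / (\<tau> * a + S)"
      using \<tau> a S pos by (intro divide_left_mono) (auto simp: mult_le_cancel_right1)
    then show ?thesis using False by simp
  qed
qed

lemma le_powr_of_le_max_powr: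
  fixes x \<rho> \<alpha> :: real
  assumes x: "0 < x" and \<rho>: "1 < \<rho>" and \<alpha>: "0 \<le> \<alpha>" "\<alpha> \<le> 1 / 2"
    and fixed_point: "x \<le> max 1 ((\<rho> * x) powr \<alpha>)"
  shows "x \<le> \<rho> powr (2 * \<alpha>)"
proof (cases "x \<le> 1")
  case True
  moreover have "1 \<le> \<rho> powr (2 * \<alpha>)" using \<rho> \<alpha> by (intro ge_one_powr_ge_zero) auto
  ultimately show ?thesis by linarith
next
  case False
  then have "x \<le> (\<rho> * x) powr \<alpha>" using fixed_point by (simp add: max_def split: if_splits)
  then have "x powr \<alpha> * x powr (1 - \<alpha>) \<le> x powr \<alpha> * \<rho> powr \<alpha>"
    using x \<rho> by (simp add: powr_add[symmetric] powr_mult mult.commute)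
  then have "x powr (1 - \<alpha>) \<le> \<rho> powr \<alpha>" using x by simp
  then have "(x powr (1 - \<alpha>)) powr (1 / (1 - \<alpha>)) \<le> (\<rho> powr \<alpha>) powr (1 / (1 - \<alpha>))"
    using \<alpha> by (intro powr_mono2) auto
  then have "x \<le> \<rho> powr (\<alpha> / (1 - \<alpha>))" using x \<alpha> by (simp add: powr_powr)
  also have "\<dots> \<le> \<rho> powr (2 * \<alpha>)"
    using \<rho> \<alpha> by (intro powr_mono) (auto simp: field_simps mult_left_le)
  finally show ?thesis .
qed

lemma ge_powr_of_min_powr_le:
  fixes x \<rho> \<alpha> :: real
  assumes x: "0 < x" and \<rho>: "1 < \<rho>" and \<alpha>: "0 \<le> \<alpha>" "\<alpha> \<le> 1 / 2"
    and fixed_point: "min 1 ((x / \<rho>) powr \<alpha>) \<le> x"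
  shows "\<rho> powr (- 2 * \<alpha>) \<le> x"
proof (cases "1 \<le> x")
  case True
  moreover have "\<rho> powr (- 2 * \<alpha>) \<le> \<rho> powr 0" using \<rho> \<alpha> by (intro powr_mono) auto
  ultimately show ?thesis using \<rho> by simp
next
  case False
  then have "(x / \<rho>) powr \<alpha> \<le> x" using fixed_point by (simp add: min_def split: if_splits)
  moreover have "(x / \<rho>) powr \<alpha> = x powr \<alpha> * \<rho> powr (- \<alpha>)"
    using x \<rho> by (subst powr_divide) (simp_all add: powr_minus divide_inverse)
  moreover have "x = x powr \<alpha> * x powr (1 - \<alpha>)" using x by (simp add: powr_add[symmetric])
  ultimately have "x powr \<alpha> * \<rho> powr (- \<alpha>) \<le> x powr \<alpha> * x powr (1 - \<alpha>)" by simp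
  then have "\<rho> powr (- \<alpha>) \<le> x powr (1 - \<alpha>)" using x by simp
  then have "(\<rho> powr (- \<alpha>)) powr (1 / (1 - \<alpha>)) \<le> (x powr (1 - \<alpha>)) powr (1 / (1 - \<alpha>))"
    using \<alpha> by (intro powr_mono2) auto
  then have "\<rho> powr (- \<alpha> / (1 - \<alpha>)) \<le> x" using x \<alpha> by (simp add: powr_powr)
  moreover have "\<rho> powr (- 2 * \<alpha>) \<le> \<rho> powr (- \<alpha> / (1 - \<alpha>))"
    using \<rho> \<alpha> by (intro powr_mono) (auto simp: field_simps mult_left_le)
  ultimately show ?thesis by linarith
qed

section \<open>Cluster sets around an equilibrium\<close>

locale urn_path_equilibrium = urn_path_edge +
  fixes \<mu> :: "'a set \<Rightarrow> real" and \<rho> :: real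
  assumes equil: "equilibrium E \<alpha> \<mu>" and mu_pos: "\<And>f. f \<in> E \<Longrightarrow> 0 < \<mu> f"
    and rho: "1 < \<rho>" and alpha_half: "\<alpha> \<le> 1 / 2"
    and Liminf_nbr: "\<And>f. f \<in> Ee E e \<Longrightarrow> ereal (\<mu> f / \<rho>) \<le> Liminf at_top (X f)"
    and Limsup_nbr: "\<And>f. f \<in> Ee E e \<Longrightarrow> Limsup at_top (X f) \<le> ereal (\<rho> * \<mu> f)"
begin

definition rival_weight :: "'a \<Rightarrow> real" where
  "rival_weight v = (\<Sum>f\<in>Ev E v - {e}. \<mu> f powr \<alpha>)"

lemma rival_weight_nonneg: "0 \<le> rival_weight v"
  unfolding rival_weight_def by (intro sum_nonneg) auto

lemma Ev_subset_Ee: "v \<in> e \<Longrightarrow> Ev E v \<subseteq> Ee E e"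
  by (auto simp: Ev_def Ee_def)

lemma rival_in_E: "f \<in> Ev E v - {e} \<Longrightarrow> f \<in> E"
  by (simp add: Ev_def)

lemma mu_e_eq: "\<mu> e = (\<Sum>v\<in>e. \<mu> e powr \<alpha> / (\<mu> e powr \<alpha> + rival_weight v))"
proof -
  have "\<mu> e = (\<Sum>v\<in>e. pw (\<mu> e) \<alpha> / (\<Sum>f\<in>Ev E v. pw (\<mu> f) \<alpha>))"
    using equil mu_pos[OF e] e unfolding equilibrium_def by blast
  also have "\<dots> = (\<Sum>v\<in>e. \<mu> e powr \<alpha> / (\<mu> e powr \<alpha> + rival_weight v))"
  proof (rule sum.cong[OF refl])
    fix v assume v: "v \<in> e"
    have "(\<Sum>f\<in>Ev E v. pw (\<mu> f) \<alpha>) = (\<Sum>f\<in>Ev E v. \<mu> f powr \<alpha>)"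
      using mu_pos by (intro sum.cong refl pw_pos_eq_powr) (auto simp: Ev_def)
    also have "\<dots> = \<mu> e powr \<alpha> + rival_weight v"
      unfolding rival_weight_def by (rule sum.remove[OF finite_Ev[OF endpoint_in_V[OF v]] e_in_Ev[OF v]])
    finally show "pw (\<mu> e) \<alpha> / (\<Sum>f\<in>Ev E v. pw (\<mu> f) \<alpha>) = \<mu> e powr \<alpha> / (\<mu> e powr \<alpha> + rival_weight v)"
      using mu_pos[OF e] by (simp add: pw_pos_eq_powr)
  qed
  finally show ?thesis .
qed

lemma linear_growth_nbr:
  assumes v: "v \<in> e" and f: "f \<in> Ev E v"
  shows "linear_growth f"
proof -
  have fE: "f \<in> E" using f by (simp add: Ev_def)
  have "ereal (\<mu> f / (2 * \<rho>)) < ereal (\<mu> f / \<rho>)"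
    using mu_pos[OF fE] rho by (simp add: divide_strict_left_mono)
  also have "\<dots> \<le> Liminf at_top (X f)" using Liminf_nbr Ev_subset_Ee[OF v] f by blast
  finally have "\<forall>\<^sub>F s in at_top. \<mu> f / (2 * \<rho>) * s \<le> real (Np s f)" by (rule eventually_Np_ge[OF fE])
  then show ?thesis unfolding linear_growth_def using mu_pos[OF fE] rho by (intro exI[of _ "\<mu> f / (2 * \<rho>)"]) auto
qed

text \<open>Rivals of \<open>e\<close> at \<open>v\<close> growing like \<open>c \<mu> f\<close> and \<open>e\<close> growing like \<open>K\<close> give \<open>e\<close> the share it would
  have at the equilibrium if \<open>\<mu> e\<close> were rescaled by \<open>K / (c \<mu> e)\<close>.\<close>

lemma rescaled_share_eq:
  assumes K: "0 < K" and c: "0 < c"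
  shows "K powr \<alpha> / (K powr \<alpha> + (\<Sum>f\<in>Ev E v - {e}. (c * \<mu> f) powr \<alpha>))
    = (K / (c * \<mu> e)) powr \<alpha> * \<mu> e powr \<alpha> / ((K / (c * \<mu> e)) powr \<alpha> * \<mu> e powr \<alpha> + rival_weight v)"
proof -
  have rivals: "(\<Sum>f\<in>Ev E v - {e}. (c * \<mu> f) powr \<alpha>) = c powr \<alpha> * rival_weight v"
    unfolding rival_weight_def sum_distrib_left
    using c mu_pos rival_in_E by (intro sum.cong refl powr_mult)
  have own: "(K / (c * \<mu> e)) powr \<alpha> * \<mu> e powr \<alpha> = K powr \<alpha> / c powr \<alpha>"
    using K c mu_pos[OF e] by (simp add: powr_divide powr_mult)
  have "0 < c powr \<alpha>" using c by simp
  then show ?thesis unfolding rivals own by (simp add: field_simps)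
qed

lemma Limsup_X_e_le_step:
  fixes m :: nat
  assumes m: "2 \<le> m" and K: "0 < K" "Limsup at_top (X e) < ereal K"
  shows "Limsup at_top (X e) \<le> ereal ((1 + 1 / m) * (max 1 ((K / ((1 - 1 / m) / \<rho> * \<mu> e)) powr \<alpha>) * \<mu> e + 8 / m))"
proof -
  define c where "c = (1 - 1 / m) / \<rho>"
  have c: "0 < c" using m rho by (simp add: c_def)
  define \<tau> where "\<tau> = (K / (c * \<mu> e)) powr \<alpha>"
  have \<tau>: "0 < \<tau>" using K c mu_pos[OF e] by (simp add: \<tau>_def)
  define q where "q v = K powr \<alpha> / (K powr \<alpha> + (\<Sum>f\<in>Ev E v - {e}. (c * \<mu> f) powr \<alpha>))" for v
  have "\<forall>\<^sub>F s in at_top. pol_e v s \<le> q v" if v: "v \<in> e" for v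
    unfolding q_def
  proof (rule eventually_pol_e_le[OF v K(1) eventually_Np_le[OF e K(2)]])
    fix f assume f: "f \<in> Ev E v - {e}"
    show "0 < c * \<mu> f" using c mu_pos[OF rival_in_E[OF f]] by simp
    have "ereal (c * \<mu> f) < ereal (\<mu> f / \<rho>)"
      using m rho mu_pos[OF rival_in_E[OF f]] by (simp add: c_def field_simps)
    also have "\<dots> \<le> Liminf at_top (X f)" using Liminf_nbr Ev_subset_Ee[OF v] f by blast
    finally show "\<forall>\<^sub>F s in at_top. c * \<mu> f * s \<le> real (Np s f)" by (rule eventually_Np_ge[OF rival_in_E[OF f]])
  qed
  then have "Limsup at_top (X e) \<le> ereal (\<Sum>v\<in>e. (1 + 1 / m) * (q v + 4 / m))"
    by (intro Limsup_X_le m linear_growth_nbr)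
  also have "(\<Sum>v\<in>e. (1 + 1 / m) * (q v + 4 / m))
    \<le> (\<Sum>v\<in>e. (1 + 1 / m) * (max 1 \<tau> * (\<mu> e powr \<alpha> / (\<mu> e powr \<alpha> + rival_weight v)) + 4 / m))"
    unfolding q_def rescaled_share_eq[OF K(1) c] \<tau>_def[symmetric]
    using scaled_share_bounds(1)[OF \<tau> _ rival_weight_nonneg] mu_pos[OF e]
    by (intro sum_mono mult_left_mono add_right_mono) auto
  also have "\<dots> = (1 + 1 / m) * (max 1 \<tau> * \<mu> e + 8 / m)"
    using edges[OF e] by (subst (2) mu_e_eq) (simp add: sum.distrib sum_distrib_left algebra_simps)
  finally show ?thesis by (simp add: \<tau>_def c_def)
qed

lemma Liminf_X_e_ge_step:
  fixes m :: nat
  assumes m: "2 \<le> m" and K: "0 < K" "ereal K < Liminf at_top (X e)"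
  shows "ereal ((1 - 1 / m) * (min 1 ((K / ((1 + 1 / m) * \<rho> * \<mu> e)) powr \<alpha>) * \<mu> e - 8 / m))
    \<le> Liminf at_top (X e)"
proof -
  define C where "C = (1 + 1 / m) * \<rho>"
  have C: "0 < C" using rho by (simp add: C_def add_pos_nonneg)
  define \<tau> where "\<tau> = (K / (C * \<mu> e)) powr \<alpha>"
  have \<tau>: "0 < \<tau>" using K C mu_pos[OF e] by (simp add: \<tau>_def)
  define q where "q v = K powr \<alpha> / (K powr \<alpha> + (\<Sum>f\<in>Ev E v - {e}. (C * \<mu> f) powr \<alpha>))" for v
  have "\<forall>\<^sub>F s in at_top. q v \<le> pol_e v s" if v: "v \<in> e" for v
    unfolding q_def
  proof (rule eventually_pol_e_ge[OF v K(1) eventually_Np_ge[OF e K(2)]])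
    fix f assume f: "f \<in> Ev E v - {e}"
    show "0 < C * \<mu> f" using C mu_pos[OF rival_in_E[OF f]] by simp
    have "Limsup at_top (X f) \<le> ereal (\<rho> * \<mu> f)" using Limsup_nbr Ev_subset_Ee[OF v] f by blast
    also have "\<dots> < ereal (C * \<mu> f)"
      using m rho mu_pos[OF rival_in_E[OF f]] by (simp add: C_def field_simps)
    finally show "\<forall>\<^sub>F s in at_top. real (Np s f) \<le> C * \<mu> f * s" by (rule eventually_Np_le[OF rival_in_E[OF f]])
  qed
  then have lim: "ereal (\<Sum>v\<in>e. (1 - 1 / m) * (q v - 4 / m)) \<le> Liminf at_top (X e)"
    by (intro Liminf_X_ge m linear_growth_nbr)
  have "(1 - 1 / m) * (min 1 \<tau> * \<mu> e - 8 / m)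
    = (\<Sum>v\<in>e. (1 - 1 / m) * (min 1 \<tau> * (\<mu> e powr \<alpha> / (\<mu> e powr \<alpha> + rival_weight v)) - 4 / m))"
    using edges[OF e] by (subst (1) mu_e_eq) (simp add: sum_subtractf sum_distrib_left algebra_simps)
  also have "\<dots> \<le> (\<Sum>v\<in>e. (1 - 1 / m) * (q v - 4 / m))"
    unfolding q_def rescaled_share_eq[OF K(1) C] \<tau>_def[symmetric]
    using scaled_share_bounds(2)[OF \<tau> _ rival_weight_nonneg] mu_pos[OF e] m
    by (intro sum_mono mult_left_mono diff_right_mono) auto
  finally show ?thesis using lim unfolding \<tau>_def C_def by (meson ereal_less_eq(3) order_trans)
qed

lemma e_in_Ee: "e \<in> Ee E e"
  using e edges[OF e] by (auto simp: Ee_def)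

lemma Limsup_X_e_le: "Limsup at_top (X e) \<le> ereal (\<rho> powr (2 * \<alpha>) * \<mu> e)"
proof -
  have mu: "0 < \<mu> e" by (rule mu_pos[OF e])
  have lo: "ereal (\<mu> e / \<rho>) \<le> Limsup at_top (X e)"
    using Liminf_nbr[OF e_in_Ee] Liminf_le_Limsup_X by (rule order_trans)
  obtain u where u: "Limsup at_top (X e) = ereal u"
    using lo Limsup_nbr[OF e_in_Ee] by (cases "Limsup at_top (X e)") auto
  have u0: "0 < u" using lo mu rho by (simp add: u) (smt (verit) divide_pos_pos)
  define h where "h j = (1 + 1 / real j) *
    (max 1 (((u + 1 / real j) / ((1 - 1 / real j) / \<rho> * \<mu> e)) powr \<alpha>) * \<mu> e + 8 * (1 / real j))" for j :: nat
  have "\<forall>\<^sub>F j in sequentially. u \<le> h j"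
    using eventually_ge_at_top[of "2::nat"]
  proof eventually_elim
    case (elim j)
    have "0 < u + 1 / real j" using u0 by (simp add: add_pos_nonneg)
    moreover have "Limsup at_top (X e) < ereal (u + 1 / real j)" using elim by (simp add: u)
    ultimately show ?case using Limsup_X_e_le_step[OF elim] by (simp add: u h_def)
  qed
  moreover have "h \<longlonglongrightarrow> (1 + 0) * (max 1 (((u + 0) / ((1 - 0) / \<rho> * \<mu> e)) powr \<alpha>) * \<mu> e + 8 * 0)"
    unfolding h_def using u0 mu rho by (intro tendsto_intros) auto
  ultimately have "u \<le> max 1 ((u / (\<mu> e / \<rho>)) powr \<alpha>) * \<mu> e"
    using tendsto_lowerbound[of h] by simp
  then have "u / \<mu> e \<le> max 1 ((\<rho> * (u / \<mu> e)) powr \<alpha>)" using mu by (simp add: field_simps)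
  then have "u / \<mu> e \<le> \<rho> powr (2 * \<alpha>)"
    using u0 mu rho alpha(1) alpha_half by (intro le_powr_of_le_max_powr) auto
  then show ?thesis using mu by (simp add: u field_simps)
qed

lemma Liminf_X_e_ge: "ereal (\<rho> powr (- 2 * \<alpha>) * \<mu> e) \<le> Liminf at_top (X e)"
proof -
  have mu: "0 < \<mu> e" by (rule mu_pos[OF e])
  have lo: "ereal (\<mu> e / \<rho>) \<le> Liminf at_top (X e)" by (rule Liminf_nbr[OF e_in_Ee])
  obtain l where l: "Liminf at_top (X e) = ereal l"
    using lo order_trans[OF Liminf_le_Limsup_X Limsup_nbr[OF e_in_Ee]] by (cases "Liminf at_top (X e)") auto
  have l0: "0 < l" using lo mu rho by (simp add: l) (smt (verit) divide_pos_pos)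
  define h where "h j = (1 - 1 / real j) *
    (min 1 (((1 - 1 / real j) * l / ((1 + 1 / real j) * \<rho> * \<mu> e)) powr \<alpha>) * \<mu> e - 8 * (1 / real j))" for j :: nat
  have "\<forall>\<^sub>F j in sequentially. h j \<le> l"
    using eventually_ge_at_top[of "2::nat"]
  proof eventually_elim
    case (elim j)
    then have "0 < (1 - 1 / real j) * l" "ereal ((1 - 1 / real j) * l) < Liminf at_top (X e)"
      using l0 by (simp_all add: l)
    from Liminf_X_e_ge_step[OF elim this] show ?case by (simp add: l h_def)
  qed
  moreover have "h \<longlonglongrightarrow> (1 - 0) * (min 1 (((1 - 0) * l / ((1 + 0) * \<rho> * \<mu> e)) powr \<alpha>) * \<mu> e - 8 * 0)"
    unfolding h_def using l0 mu rho by (intro tendsto_intros) auto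
  ultimately have "min 1 ((l / (\<rho> * \<mu> e)) powr \<alpha>) * \<mu> e \<le> l"
    using tendsto_upperbound[of h] by simp
  then have "min 1 ((l / \<mu> e / \<rho>) powr \<alpha>) \<le> l / \<mu> e" using mu by (simp add: field_simps)
  then have "\<rho> powr (- 2 * \<alpha>) \<le> l / \<mu> e"
    using l0 mu rho alpha(1) alpha_half by (intro ge_powr_of_min_powr_le) auto
  then show ?thesis using mu by (simp add: l field_simps)
qed

end

lemma cluster_bound_on_path:
  fixes Npre :: "'w \<Rightarrow> real \<Rightarrow> 'a set \<Rightarrow> nat"
  assumes graph: "countable_graph_bdeg V E \<Delta>" and exponent: "0 \<le> \<alpha>" "\<alpha> \<le> 1 / 2"
    and enum: "\<forall>v\<in>V. bij_betw (enum v) {..<card (Ev E v)} (Ev E v)"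
    and equil: "equilibrium E \<alpha> \<mu>" and nonvan: "non_vanishing E \<mu>" and rho: "1 < \<rho>" and e: "e \<in> E"
    and path: "\<forall>t. \<forall>f\<in>E. Npre \<omega> t f = 1 + (\<Sum>v\<in>f. card {(s, u) \<in> P v \<omega>. 0 \<le> s \<and> s < t \<and>
                                        selects E \<alpha> enum v (Npre \<omega> s) u f})"
    and regular: "regular_atoms V (\<lambda>v. P v \<omega>)"
    and nbrs: "\<forall>f\<in>Ee E e. cluster (urn_N E \<alpha> enum P Npre) \<omega> f \<subseteq> {ereal (\<mu> f / \<rho>) .. ereal (\<rho> * \<mu> f)}"
  shows "cluster (urn_N E \<alpha> enum P Npre) \<omega> e
    \<subseteq> {ereal (\<rho> powr (- 2 * \<alpha>) * \<mu> e) .. ereal (\<rho> powr (2 * \<alpha>) * \<mu> e)}"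
proof -
  interpret urn_path_edge V E \<alpha> enum "\<lambda>v. P v \<omega>" "Npre \<omega>" e
    using graph enum exponent path regular e by unfold_locales (auto simp: countable_graph_bdeg_def)
  have cluster: "cluster (urn_N E \<alpha> enum P Npre) \<omega> f = {Liminf at_top (X f) .. Limsup at_top (X f)}" for f
    by (simp add: cluster_def urn_N_def N_def hits_def conj_assoc)
  from Liminf_le_Limsup_X have "ereal (\<mu> f / \<rho>) \<le> Liminf at_top (X f) \<and> Limsup at_top (X f) \<le> ereal (\<rho> * \<mu> f)"
    if "f \<in> Ee E e" for f
    using nbrs that unfolding cluster by (force simp: subset_iff)
  then interpret urn_path_equilibrium V E \<alpha> enum "\<lambda>v. P v \<omega>" "Npre \<omega>" e \<mu> \<rho>
    using equil nonvan rho exponent by unfold_locales (auto simp: non_vanishing_def)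
  show ?thesis unfolding cluster using Liminf_X_e_ge Limsup_X_e_le by auto
qed

theorem mainTheorem5:
  fixes V :: "'a set" and E :: "'a set set" and \<Delta> :: nat and \<alpha> :: real
    and M :: "'w measure" and P :: "'a \<Rightarrow> 'w \<Rightarrow> (real \<times> real) set"
    and enum :: "'a \<Rightarrow> nat \<Rightarrow> 'a set"
    and Npre :: "'w \<Rightarrow> real \<Rightarrow> 'a set \<Rightarrow> nat"
    and \<mu> :: "'a set \<Rightarrow> real" and \<rho> :: real and e :: "'a set"
  assumes graph: "countable_graph_bdeg V E \<Delta>"
    and alpha: "0 \<le> \<alpha>" "\<alpha> < 1/2"
    and ppp: "iid_ppp_family M V P"
    and enum: "\<forall>v\<in>V. bij_betw (enum v) {..<card (Ev E v)} (Ev E v)"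
    and proc: "urn_pre M E \<alpha> enum P Npre"
    and equil: "equilibrium E \<alpha> \<mu>" and nonvan: "non_vanishing E \<mu>"
    and mu_lb: "\<forall>e'\<in>E. \<mu> e' \<ge> 2 / (real \<Delta> powr (1 / (1 - \<alpha>)))"
    and rho: "\<rho> > 1"
    and e: "e \<in> E"
  shows "AE \<omega> in M.
           (\<forall>e'\<in>Ee E e. cluster (urn_N E \<alpha> enum P Npre) \<omega> e'
                            \<subseteq> {ereal (\<mu> e' / \<rho>) .. ereal (\<rho> * \<mu> e')})
           \<longrightarrow> cluster (urn_N E \<alpha> enum P Npre) \<omega> e
                 \<subseteq> {ereal (\<rho> powr (- 2 * \<alpha>) * \<mu> e) .. ereal (\<rho> powr (2 * \<alpha>) * \<mu> e)}"
proof -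
  \<comment> \<open>Only the equilibrium equation at \<open>e\<close> enters the argument.\<close>
  have "countable V" using graph by (simp add: countable_graph_bdeg_def)
  with proc AE_regular_atoms[OF ppp] have "AE \<omega> in M. regular_atoms V (\<lambda>v. P v \<omega>) \<and>
    (\<forall>t. \<forall>f\<in>E. Npre \<omega> t f = 1 + (\<Sum>v\<in>f. card {(s, u) \<in> P v \<omega>. 0 \<le> s \<and> s < t \<and>
                                        selects E \<alpha> enum v (Npre \<omega> s) u f}))"
    unfolding urn_pre_def by (intro AE_conjI) auto
  then show ?thesis
  proof eventually_elim
    case (elim \<omega>)
    with alpha show ?case
      by (intro impI cluster_bound_on_path[OF graph _ _ enum equil nonvan rho e]) auto
  qed
qed

end
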